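(* Let $p,\alpha,\beta>0$ and $\sigma^2>0$, and let $X=(X_t)_{t\ge0}$ be a real-valued Lévy process with characteristics $(a,\sigma^2,\Pi)$ where $\Pi(dx)=\beta\alpha e^{\alpha x}\mathbf{1}_{\{x\le0\}}\,dx$ and $a=p+\int_{|x|<1}x\,\Pi(dx)$ (so that $u+X_t$ is the Cramér–Lundberg model perturbed by Brownian motion, $u+pt+\sigma W_t-\sum_{n=1}^{N_t}U_n$, with $N$ a Poisson process of rate $\beta$, $W$ a standard Brownian motion and $U_n$ i.i.d. exponential with rate $\alpha$, all independent). For $u\ge0$ let $\tau(u)=\inf\{t\ge0:X_t\le -u\}$ ($\tau(u)=+\infty$ if the set is empty). Let $\Delta=(\sigma^2\alpha-2p)^2+8\sigma^2\beta$ and $\gamma_-=\frac{\sigma^2\alpha+2p-\sqrt{\Delta}}{2\sigma^2}$. Then: (1) if $p\le \beta/\alpha$, then $\mathbf{P}(\tau(u)<+\infty)=1$ for all $u\ge0$; (2) if $p>\beta/\alpha$ and $\gamma_-<\alpha$, then $\mathbf{P}(\tau(u)<+\infty)\le e^{-\gamma_- u}$ for all $u\ge 0$; (3) if $p>\beta/\alpha$ and $\gamma_-\ge\alpha$, then $\mathbf{P}(\tau(u)<+\infty)\le e^{-\alpha u}$ for all $u\ge0$.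
   Context: A Lévy process with characteristics $(a,\sigma^2,\Pi)$ has characteristic function $\mathbf{E}(e^{i\lambda X_t})=e^{t\Phi(\lambda)}$, $\Phi(\lambda)=ia\lambda-\frac{\sigma^2}{2}\lambda^2+\int_{\mathbb{R}}(e^{i\lambda x}-1-i\lambda x\mathbf{1}_{\{|x|<1\}})\Pi(dx)$. $\mathbf{P}(\tau(u)<+\infty)$ is the ultimate ruin probability of $u+X$. *)

theory Defs
  imports "HOL-Probability.Probability"
begin

definition cadlag :: "(real \<Rightarrow> real) \<Rightarrow> bool" where
  "cadlag f \<longleftrightarrow> (\<forall>t\<ge>0. continuous (at_right t) f) \<and> (\<forall>t>0. \<exists>l. (f \<longlongrightarrow> l) (at_left t))"

definition levy_process :: "'a measure \<Rightarrow> (real \<Rightarrow> 'a \<Rightarrow> real) \<Rightarrow> bool" where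
  "levy_process M X \<longleftrightarrow>
     prob_space M \<and>
     (\<forall>t\<ge>0. X t \<in> borel_measurable M) \<and>
     (AE \<omega> in M. X 0 \<omega> = 0) \<and>
     (AE \<omega> in M. cadlag (\<lambda>t. X t \<omega>)) \<and>
     (\<forall>(n::nat) (t::nat \<Rightarrow> real). 0 \<le> t 0 \<and> (\<forall>k<n. t k < t (Suc k)) \<longrightarrow>
        prob_space.indep_vars M (\<lambda>_. borel) (\<lambda>k \<omega>. X (t (Suc k)) \<omega> - X (t k) \<omega>) {..<n}) \<and>
     (\<forall>s t. 0 \<le> s \<and> s \<le> t \<longrightarrow>
        distr M borel (\<lambda>\<omega>. X t \<omega> - X s \<omega>) = distr M borel (X (t - s)))"

definition levy_exponent :: "real \<Rightarrow> real \<Rightarrow> real measure \<Rightarrow> real \<Rightarrow> complex" where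
  "levy_exponent a s2 Lm l =
     \<i> * complex_of_real (a * l) - complex_of_real (s2 / 2 * l\<^sup>2)
     + (CLINT x|Lm. exp (\<i> * complex_of_real (l * x)) - 1
                     - \<i> * complex_of_real (l * x * indicator {y. \<bar>y\<bar> < 1} x))"

definition has_characteristics ::
    "'a measure \<Rightarrow> (real \<Rightarrow> 'a \<Rightarrow> real) \<Rightarrow> real \<Rightarrow> real \<Rightarrow> real measure \<Rightarrow> bool" where
  "has_characteristics M X a s2 Lm \<longleftrightarrow>
     (\<forall>t\<ge>0. \<forall>l. char (distr M borel (X t)) l = exp (complex_of_real t * levy_exponent a s2 Lm l))"

definition exp_jump_measure :: "real \<Rightarrow> real \<Rightarrow> real measure" where
  "exp_jump_measure \<alpha> \<beta> =
     density lborel (\<lambda>x. ennreal (\<beta> * \<alpha> * exp (\<alpha> * x)) * indicator {..0} x)"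

definition ruin_time :: "(real \<Rightarrow> 'a \<Rightarrow> real) \<Rightarrow> real \<Rightarrow> 'a \<Rightarrow> ereal" where
  "ruin_time X u \<omega> =
     (if {t. 0 \<le> t \<and> X t \<omega> \<le> - u} = {} then \<infinity>
      else ereal (Inf {t. 0 \<le> t \<and> X t \<omega> \<le> - u}))"

text \<open>P(tau(u) < infinity), measured in the completion of M (the event is universally
  measurable but need not lie in sets M itself).\<close>
definition ruin_prob :: "'a measure \<Rightarrow> (real \<Rightarrow> 'a \<Rightarrow> real) \<Rightarrow> real \<Rightarrow> real" where
  "ruin_prob M X u = measure (completion M) {\<omega> \<in> space M. ruin_time X u \<omega> < \<infinity>}"

end

theory Submission
  imports Defs
begin

text \<open>The increments of \<open>X\<close> over a time step \<open>h\<close> form a random walk whose steps have the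
  law of \<open>X\<^sub>h\<close>. Identifying that law through its characteristic function (a Gaussian plus a
  compound Poisson sum of exponential claims) gives \<open>E exp (t X\<^sub>h) = exp (h \<psi>(t))\<close> for
  \<open>t > -\<alpha>\<close>, where \<open>\<psi>(t) = p t + \<sigma>\<^sup>2 t\<^sup>2 / 2 + \<beta> (\<alpha> / (\<alpha> + t) - 1)\<close>.

  With a safety loading, \<open>\<psi>(-g) = 0\<close> has the root \<open>g = \<gamma>\<close>, and \<open>0 < \<gamma> < \<alpha>\<close>; in particular the
  third alternative of the theorem never occurs. Then \<open>exp (- \<gamma> (u + X))\<close> sampled on a grid is a
  martingale, and stopping it at the first ruin on the grid bounds the probability of ruin on
  every dyadic grid by \<open>exp (- \<gamma> u)\<close>; right continuity of the paths carries this over to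
  continuous time.

  Without a safety loading, \<open>\<psi>(-r) \<ge> \<sigma>\<^sup>2 r\<^sup>2 / 2 > 0\<close> for small \<open>r > 0\<close>, so the stopped martingale
  \<open>exp (- r (u + X\<^sub>n) - n \<psi>(-r))\<close> of the walk with unit steps loses all its mass \<open>exp (- r u)\<close> on
  the event of no ruin. What remains is carried by the ruin event, up to an overshoot term that
  a Chernoff bound on large jumps makes negligible as \<open>r \<rightarrow> 0\<close>; hence ruin is certain.\<close>

section \<open>The Levy exponent of the exponential jump measure\<close>

lemma einterval_minf_zero: "einterval (-\<infinity>) 0 = {..<(0::real)}"
  by (auto simp: einterval_def zero_ereal_def)

lemma set_integrable_exp_Iio:
  fixes r :: real
  assumes r: "r > 0"
  shows "set_integrable lborel (einterval (-\<infinity>) 0) (\<lambda>x. exp (r * x))"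
proof -
  have deriv: "\<And>x. DERIV (\<lambda>x. exp (r * x) / r) x :> exp (r * x)"
    using r by (auto intro!: derivative_eq_intros)
  have lim_bot: "(((\<lambda>x. exp (r * x) / r) \<circ> real_of_ereal) \<longlongrightarrow> 0) (at_right (-\<infinity>))"
    unfolding ereal_tendsto_simps using r by real_asymp
  have lim_zero: "(((\<lambda>x. exp (r * x) / r) \<circ> real_of_ereal) \<longlongrightarrow> 1 / r) (at_left 0)"
    unfolding zero_ereal_def ereal_tendsto_simps using r
    by (auto intro!: tendsto_eq_intros)
  show ?thesis
    using interval_integral_FTC_nonneg[OF _ deriv _ _ lim_bot lim_zero] by auto
qed

lemma has_bochner_integral_cexp_Iic:
  fixes w :: complex
  assumes w: "Re w > 0"
  shows "has_bochner_integral lborel (\<lambda>x. indicator {..0} x *\<^sub>R exp (w * of_real x)) (1 / w)"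
proof -
  have w0: "w \<noteq> 0" using w by auto
  have integrable: "set_integrable lborel (einterval (-\<infinity>) 0) (\<lambda>x. exp (w * of_real x))"
    by (rule set_integrable_bound[OF set_integrable_exp_Iio[OF w]])
      (auto simp: norm_exp_eq_Re set_borel_measurable_def)
  have deriv: "((\<lambda>x. exp (w * of_real x) / w) has_vector_derivative exp (w * of_real x)) (at x)"
    for x :: real
  proof -
    have "((\<lambda>z. exp (w * z) / w) has_field_derivative exp (w * of_real x)) (at (of_real x))"
      using w0 by (auto intro!: derivative_eq_intros)
    then show ?thesis by (rule has_vector_derivative_real_field)
  qed
  have lim_bot: "(((\<lambda>x. exp (w * of_real x) / w) \<circ> real_of_ereal) \<longlongrightarrow> 0) (at_right (-\<infinity>))"
  proof -
    have "((\<lambda>x::real. exp (Re w * x)) \<longlongrightarrow> 0) at_bot"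
      using w by real_asymp
    then have "((\<lambda>x::real. exp (Re w * x) / norm w) \<longlongrightarrow> 0) at_bot"
      by (rule tendsto_divide_zero)
    then have "((\<lambda>x::real. exp (w * of_real x) / w) \<longlongrightarrow> 0) at_bot"
      by (subst tendsto_norm_zero_iff[symmetric]) (simp add: norm_divide norm_exp_eq_Re)
    then show ?thesis unfolding ereal_tendsto_simps .
  qed
  have lim_zero: "(((\<lambda>x. exp (w * of_real x) / w) \<circ> real_of_ereal) \<longlongrightarrow> 1 / w) (at_left 0)"
    unfolding zero_ereal_def ereal_tendsto_simps
    using w0 by (auto intro!: tendsto_eq_intros)
  have "(LBINT x=-\<infinity>..0. exp (w * of_real x)) = 1 / w"
    using interval_integral_FTC_integrable[OF _ deriv _ integrable lim_bot lim_zero] w0 by auto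
  with integrable
  have "has_bochner_integral lborel (\<lambda>x. indicator {..<0} x *\<^sub>R exp (w * of_real x)) (1 / w)"
    by (simp add: has_bochner_integral_iff set_integrable_def set_lebesgue_integral_def
        interval_lebesgue_integral_def einterval_minf_zero zero_ereal_def)
  then show ?thesis
    by (rule has_bochner_integral_cong_AE[THEN iffD1, rotated -1])
      (auto intro!: AE_I[where N="{0}"] simp: indicator_def)
qed

definition neg_exp_density :: "real \<Rightarrow> real \<Rightarrow> real" where
  "neg_exp_density \<alpha> x = \<alpha> * exp (\<alpha> * x) * indicator {..0} x"

lemma neg_exp_density_nonneg: "\<alpha> > 0 \<Longrightarrow> neg_exp_density \<alpha> x \<ge> 0"
  by (auto simp: neg_exp_density_def indicator_def)

lemma neg_exp_density_measurable[measurable]: "neg_exp_density \<alpha> \<in> borel_measurable borel"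
  unfolding neg_exp_density_def by measurable

lemma has_bochner_integral_neg_exp_density_cexp:
  fixes z :: complex
  assumes a: "\<alpha> > 0" and z: "Re z > - \<alpha>"
  shows "has_bochner_integral lborel (\<lambda>x. neg_exp_density \<alpha> x *\<^sub>R exp (z * of_real x))
    (\<alpha> / (\<alpha> + z))"
proof -
  have "has_bochner_integral lborel
      (\<lambda>x. of_real \<alpha> * (indicator {..0} x *\<^sub>R exp ((of_real \<alpha> + z) * of_real x)))
      (of_real \<alpha> * (1 / (of_real \<alpha> + z)))"
    using z by (intro has_bochner_integral_mult_right has_bochner_integral_cexp_Iic) simp
  moreover have "of_real \<alpha> * (indicator {..0} x *\<^sub>R exp ((of_real \<alpha> + z) * of_real x))
      = neg_exp_density \<alpha> x *\<^sub>R exp (z * of_real x)" for x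
    by (auto simp: neg_exp_density_def indicator_def scaleR_conv_of_real distrib_right exp_add
        exp_of_real simp flip: of_real_mult)
  ultimately show ?thesis by simp
qed

lemma has_bochner_integral_neg_exp_density_exp:
  assumes a: "\<alpha> > 0" and t: "t > - \<alpha>"
  shows "has_bochner_integral lborel (\<lambda>x. neg_exp_density \<alpha> x * exp (t * x)) (\<alpha> / (\<alpha> + t))"
proof -
  let ?f = "\<lambda>x. neg_exp_density \<alpha> x * exp (t * x)"
  have "has_bochner_integral lborel (\<lambda>x. complex_of_real (?f x)) (complex_of_real (\<alpha> / (\<alpha> + t)))"
    using has_bochner_integral_neg_exp_density_cexp[OF a, of "of_real t"] t
    by (simp add: scaleR_conv_of_real exp_of_real flip: of_real_mult)
  then have "integrable lborel (\<lambda>x. complex_of_real (?f x))"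
    and "integral\<^sup>L lborel (\<lambda>x. complex_of_real (?f x)) = complex_of_real (\<alpha> / (\<alpha> + t))"
    by (auto intro: has_bochner_integral_integral_eq integrable.intros)
  then show ?thesis
    unfolding has_bochner_integral_iff complex_of_real_integrable_eq integral_complex_of_real
    by (simp only: of_real_eq_iff)
qed

lemma integrable_neg_exp_density_bounded:
  fixes f :: "real \<Rightarrow> 'b::{banach, second_countable_topology}"
  assumes a: "\<alpha> > 0" and f[measurable]: "f \<in> borel_measurable borel"
    and bound: "\<And>x. norm (f x) \<le> B"
  shows "integrable lborel (\<lambda>x. neg_exp_density \<alpha> x *\<^sub>R f x)"
proof (rule Bochner_Integration.integrable_bound)
  show "integrable lborel (\<lambda>x. B * neg_exp_density \<alpha> x)"
    using has_bochner_integral_neg_exp_density_exp[OF a, of 0] a by (auto simp: has_bochner_integral_iff)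
  show "AE x in lborel. norm (neg_exp_density \<alpha> x *\<^sub>R f x) \<le> norm (B * neg_exp_density \<alpha> x)"
  proof (intro AE_I2)
    fix x
    have "neg_exp_density \<alpha> x * norm (f x) \<le> neg_exp_density \<alpha> x * B"
      by (rule mult_left_mono[OF bound neg_exp_density_nonneg[OF a]])
    then show "norm (neg_exp_density \<alpha> x *\<^sub>R f x) \<le> norm (B * neg_exp_density \<alpha> x)"
      using neg_exp_density_nonneg[OF a, of x] by (simp add: mult.commute)
  qed
qed measurable

lemma exp_jump_measure_eq_density:
  "\<alpha> > 0 \<Longrightarrow> \<beta> > 0 \<Longrightarrow>
    exp_jump_measure \<alpha> \<beta> = density lborel (\<lambda>x. ennreal (\<beta> * neg_exp_density \<alpha> x))"
  unfolding exp_jump_measure_def neg_exp_density_def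
  by (intro density_cong) (auto simp: indicator_def)

lemma levy_exponent_exp_jump:
  assumes a: "\<alpha> > 0" and b: "\<beta> > 0"
    and drift: "A = p + (LINT x|exp_jump_measure \<alpha> \<beta>. x * indicator {y. \<bar>y\<bar> < 1} x)"
  shows "levy_exponent A s (exp_jump_measure \<alpha> \<beta>) l =
     \<i> * of_real (p * l) - of_real (s / 2 * l\<^sup>2) + \<beta> * \<alpha> / (\<alpha> + \<i> * l) - \<beta>"
proof -
  define trunc where "trunc x = x * indicator {y. \<bar>y\<bar> < 1} x" for x :: real
  define J where "J = (LINT x|lborel. neg_exp_density \<alpha> x *\<^sub>R trunc x)"
  have [measurable]: "trunc \<in> borel_measurable borel"
    unfolding trunc_def by measurable
  have nonneg: "AE x in lborel. 0 \<le> \<beta> * neg_exp_density \<alpha> x"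
    using b neg_exp_density_nonneg[OF a] by auto
  have "integrable lborel (\<lambda>x. neg_exp_density \<alpha> x *\<^sub>R trunc x)"
    by (rule integrable_neg_exp_density_bounded[OF a, where B=1])
      (auto simp: trunc_def indicator_def)
  then have int_trunc: "has_bochner_integral lborel
      (\<lambda>x. neg_exp_density \<alpha> x *\<^sub>R complex_of_real (trunc x)) (of_real J)"
    unfolding J_def
    by (subst scaleR_conv_of_real, subst of_real_mult[symmetric], intro has_bochner_integral_of_real)
      (simp add: has_bochner_integral_iff)
  have A: "A = p + \<beta> * J"
    unfolding drift J_def exp_jump_measure_eq_density[OF a b] trunc_def[symmetric]
    by (subst integral_density) (use nonneg in \<open>auto simp: mult.assoc\<close>)
  have "has_bochner_integral lborel
     (\<lambda>x. of_real \<beta> * (neg_exp_density \<alpha> x *\<^sub>R exp ((\<i> * of_real l) * of_real x)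
        - neg_exp_density \<alpha> x *\<^sub>R (1::complex)
        - (\<i> * of_real l) * (neg_exp_density \<alpha> x *\<^sub>R complex_of_real (trunc x))))
     (of_real \<beta> * (\<alpha> / (\<alpha> + \<i> * l) - 1 - (\<i> * of_real l) * of_real J))"
    using has_bochner_integral_neg_exp_density_cexp[OF a, of "\<i> * of_real l"]
      has_bochner_integral_neg_exp_density_cexp[OF a, of 0] a
    by (intro has_bochner_integral_mult_right has_bochner_integral_diff int_trunc) auto
  then have "has_bochner_integral lborel
     (\<lambda>x. (\<beta> * neg_exp_density \<alpha> x) *\<^sub>R (exp (\<i> * complex_of_real (l * x)) - 1
        - \<i> * complex_of_real (l * trunc x)))
     (\<beta> * (\<alpha> / (\<alpha> + \<i> * l) - 1 - (\<i> * of_real l) * of_real J))"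
    by (rule has_bochner_integral_cong[THEN iffD1, rotated -1])
      (auto simp: scaleR_conv_of_real algebra_simps)
  then have "(CLINT x|exp_jump_measure \<alpha> \<beta>. exp (\<i> * complex_of_real (l * x)) - 1
                     - \<i> * complex_of_real (l * x * indicator {y. \<bar>y\<bar> < 1} x))
     = \<beta> * (\<alpha> / (\<alpha> + \<i> * l) - 1 - (\<i> * of_real l) * of_real J)"
    unfolding exp_jump_measure_eq_density[OF a b] mult.assoc trunc_def[symmetric]
    by (subst integral_density) (use nonneg in \<open>auto simp: has_bochner_integral_iff\<close>)
  then show ?thesis
    unfolding levy_exponent_def A by (simp add: algebra_simps)
qed


section \<open>An explicit law with the characteristic function of \<open>X\<^sub>h\<close>\<close>

definition gauss_law :: "real \<Rightarrow> real \<Rightarrow> real measure" where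
  "gauss_law m c = distr std_normal_distribution borel (\<lambda>z. m + c * z)"

lemma prob_space_gauss_law: "prob_space (gauss_law m c)"
  unfolding gauss_law_def
  by (intro prob_space.prob_space_distr real_distribution.axioms(1) real_dist_normal_dist)
    measurable

lemma sets_gauss_law[simp]: "sets (gauss_law m c) = sets borel"
  by (simp add: gauss_law_def)

lemma char_gauss_law: "char (gauss_law m c) l = iexp (l * m) * of_real (exp (- ((l * c)\<^sup>2) / 2))"
proof -
  have "char (gauss_law m c) l = (CLINT z|std_normal_distribution. iexp (l * m) * iexp ((l * c) * z))"
    unfolding gauss_law_def char_def
    by (subst integral_distr) (auto simp: algebra_simps exp_add[symmetric])
  also have "\<dots> = iexp (l * m) * char std_normal_distribution (l * c)"
    unfolding char_def by simp
  finally show ?thesis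
    by (simp add: char_std_normal_distribution)
qed

lemma nn_integral_exp_std_normal:
  "(\<integral>\<^sup>+z. ennreal (exp (t * z)) \<partial>std_normal_distribution) = ennreal (exp (t\<^sup>2 / 2))"
proof -
  have shift: "std_normal_density z * exp (t * z) = exp (t\<^sup>2 / 2) * normal_density t 1 z" for z
    by (simp add: normal_density_def power2_eq_square algebra_simps exp_add[symmetric]
        exp_diff[symmetric] diff_divide_distrib add_divide_distrib)
  have "(\<integral>\<^sup>+z. ennreal (exp (t * z)) \<partial>std_normal_distribution)
      = (\<integral>\<^sup>+z. ennreal (exp (t\<^sup>2 / 2) * normal_density t 1 z) \<partial>lborel)"
    by (subst nn_integral_density) (auto intro!: nn_integral_cong simp: ennreal_mult[symmetric] shift)
  also have "\<dots> = ennreal (\<integral>z. exp (t\<^sup>2 / 2) * normal_density t 1 z \<partial>lborel)"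
    by (intro nn_integral_eq_integral) auto
  finally show ?thesis by simp
qed

lemma nn_integral_exp_gauss_law:
  "(\<integral>\<^sup>+x. ennreal (exp (t * x)) \<partial>gauss_law m c) = ennreal (exp (t * m + (t * c)\<^sup>2 / 2))"
proof -
  have "(\<integral>\<^sup>+x. ennreal (exp (t * x)) \<partial>gauss_law m c)
      = (\<integral>\<^sup>+z. ennreal (exp (t * m)) * ennreal (exp ((t * c) * z)) \<partial>std_normal_distribution)"
    unfolding gauss_law_def
    by (subst nn_integral_distr) (auto simp: ennreal_mult[symmetric] algebra_simps exp_add[symmetric])
  also have "\<dots> = ennreal (exp (t * m)) * ennreal (exp ((t * c)\<^sup>2 / 2))"
    by (subst nn_integral_cmult) (auto simp: nn_integral_exp_std_normal)
  finally show ?thesis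
    by (simp add: ennreal_mult[symmetric] exp_add)
qed

definition neg_exp_law :: "real \<Rightarrow> real measure" where
  "neg_exp_law \<alpha> = density lborel (\<lambda>x. ennreal (neg_exp_density \<alpha> x))"

lemma sets_neg_exp_law[simp]: "sets (neg_exp_law \<alpha>) = sets borel"
  by (simp add: neg_exp_law_def)

lemma nn_integral_exp_neg_exp_law:
  assumes a: "\<alpha> > 0" and t: "t > - \<alpha>"
  shows "(\<integral>\<^sup>+x. ennreal (exp (t * x)) \<partial>neg_exp_law \<alpha>) = ennreal (\<alpha> / (\<alpha> + t))"
proof -
  have "(\<integral>\<^sup>+x. ennreal (exp (t * x)) \<partial>neg_exp_law \<alpha>)
      = (\<integral>\<^sup>+x. ennreal (neg_exp_density \<alpha> x * exp (t * x)) \<partial>lborel)"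
    unfolding neg_exp_law_def
    by (subst nn_integral_density) (auto simp: ennreal_mult[symmetric] neg_exp_density_nonneg[OF a])
  also have "\<dots> = ennreal (\<alpha> / (\<alpha> + t))"
    using has_bochner_integral_neg_exp_density_exp[OF a t] neg_exp_density_nonneg[OF a]
    by (subst nn_integral_eq_integral) (auto simp: has_bochner_integral_iff)
  finally show ?thesis .
qed

lemma prob_space_neg_exp_law: "\<alpha> > 0 \<Longrightarrow> prob_space (neg_exp_law \<alpha>)"
  using nn_integral_exp_neg_exp_law[of \<alpha> 0] by (intro prob_spaceI) simp

lemma char_neg_exp_law: "\<alpha> > 0 \<Longrightarrow> char (neg_exp_law \<alpha>) l = \<alpha> / (\<alpha> + \<i> * l)"
  using has_bochner_integral_neg_exp_density_cexp[of \<alpha> "\<i> * of_real l"]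
  unfolding char_def neg_exp_law_def
  by (subst integral_density) (auto simp: neg_exp_density_nonneg has_bochner_integral_iff algebra_simps)

lemma integrable_bounded_borel:
  fixes f :: "real \<Rightarrow> 'b::{banach, second_countable_topology}"
  assumes "prob_space N" "sets N = sets borel" "f \<in> borel_measurable borel" "\<And>x. norm (f x) \<le> B"
  shows "integrable N f"
  using assms by (intro finite_measure.integrable_const_bound[where B=B] prob_space.finite_measure)
    (auto simp: measurable_cong_sets[OF assms(2) refl])

lemma norm_integral_le_bound:
  fixes f :: "real \<Rightarrow> 'b::{banach, second_countable_topology}"
  assumes N: "prob_space N" "sets N = sets borel" and f: "f \<in> borel_measurable borel"
    and bound: "\<And>x. norm (f x) \<le> B"
  shows "norm (integral\<^sup>L N f) \<le> B"
proof -
  interpret prob_space N by (rule N)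
  have "norm (integral\<^sup>L N f) \<le> integral\<^sup>L N (\<lambda>x. norm (f x))"
    by (rule integral_norm_bound)
  also have "\<dots> \<le> integral\<^sup>L N (\<lambda>x. B)"
    using bound integrable_bounded_borel[OF N f bound] by (intro integral_mono) auto
  finally show ?thesis by (simp add: prob_space)
qed

lemma
  fixes K :: "'b \<Rightarrow> real measure" and P :: "'b pmf"
  assumes K: "\<And>n. prob_space (K n)" "\<And>n. sets (K n) = sets borel"
  shows prob_space_bind_pmf_kernel: "prob_space (measure_pmf P \<bind> K)"
    and sets_bind_pmf_kernel: "sets (measure_pmf P \<bind> K) = sets borel"
    and measurable_pmf_kernel: "K \<in> measurable (measure_pmf P) (subprob_algebra borel)"
proof -
  have P: "measure_pmf P \<in> space (prob_algebra (measure_pmf P))"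
    by (simp add: space_prob_algebra measure_pmf.prob_space_axioms)
  have "K \<in> measure_pmf P \<rightarrow>\<^sub>M prob_algebra borel"
    using K by (simp add: space_prob_algebra)
  then show "prob_space (measure_pmf P \<bind> K)" and "sets (measure_pmf P \<bind> K) = sets borel"
    by (rule prob_space_bind'[OF P], rule sets_bind'[OF P])
  show "K \<in> measurable (measure_pmf P) (subprob_algebra borel)"
    using K by (simp add: space_subprob_algebra prob_space_imp_subprob_space)
qed

lemma integral_bind_pmf_real:
  fixes K :: "'b \<Rightarrow> real measure" and P :: "'b pmf" and f :: "real \<Rightarrow> real"
  assumes K: "\<And>n. prob_space (K n)" "\<And>n. sets (K n) = sets borel"
    and f: "f \<in> borel_measurable borel" and bound: "\<And>x. \<bar>f x\<bar> \<le> B"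
  shows "integral\<^sup>L (measure_pmf P \<bind> K) f = (\<integral>n. integral\<^sup>L (K n) f \<partial>measure_pmf P)"
proof (rule integral_bind[where K=borel and B=B and B'=1])
  show "K \<in> measurable (measure_pmf P) (subprob_algebra borel)"
    by (rule measurable_pmf_kernel[OF K])
  show "AE x in measure_pmf P. emeasure (K x) (space (K x)) \<le> ennreal 1"
    using K by (simp add: prob_space.emeasure_space_1)
qed (use f bound measure_pmf.finite_measure_axioms in auto)

lemma integral_bind_pmf_complex:
  fixes K :: "'b \<Rightarrow> real measure" and P :: "'b pmf" and f :: "real \<Rightarrow> complex"
  assumes K: "\<And>n. prob_space (K n)" "\<And>n. sets (K n) = sets borel"
    and f[measurable]: "f \<in> borel_measurable borel" and bound: "\<And>x. norm (f x) \<le> B"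
  shows "integral\<^sup>L (measure_pmf P \<bind> K) f = (\<integral>n. integral\<^sup>L (K n) f \<partial>measure_pmf P)"
proof -
  have int_bind: "integrable (measure_pmf P \<bind> K) f"
    using prob_space_bind_pmf_kernel[OF K] sets_bind_pmf_kernel[OF K] f bound
    by (rule integrable_bounded_borel)
  have int_K: "integrable (K n) f" for n
    using K f bound by (rule integrable_bounded_borel)
  have int_P: "integrable (measure_pmf P) (\<lambda>n. integral\<^sup>L (K n) f)"
    using norm_integral_le_bound[OF K f bound]
    by (intro measure_pmf.integrable_const_bound[where B=B]) auto
  have Re_part: "integral\<^sup>L (measure_pmf P \<bind> K) (\<lambda>x. Re (f x))
      = (\<integral>n. integral\<^sup>L (K n) (\<lambda>x. Re (f x)) \<partial>measure_pmf P)"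
    using bound abs_Re_le_cmod order_trans
    by (intro integral_bind_pmf_real[OF K, where B=B]) (measurable, blast)
  have Im_part: "integral\<^sup>L (measure_pmf P \<bind> K) (\<lambda>x. Im (f x))
      = (\<integral>n. integral\<^sup>L (K n) (\<lambda>x. Im (f x)) \<partial>measure_pmf P)"
    using bound abs_Im_le_cmod order_trans
    by (intro integral_bind_pmf_real[OF K, where B=B]) (measurable, blast)
  show ?thesis
    using Re_part Im_part int_bind int_K int_P
    by (simp add: complex_eq_iff)
qed

lemma integral_measure_pmf_nat:
  fixes g :: "nat \<Rightarrow> complex" and P :: "nat pmf"
  assumes bound: "\<And>n. norm (g n) \<le> B"
  shows "(\<integral>n. g n \<partial>measure_pmf P) = (\<Sum>n. pmf P n *\<^sub>R g n)"
proof -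
  have "integrable (measure_pmf P) g"
    by (rule measure_pmf.integrable_const_bound[where B=B]) (use bound in auto)
  then have "integrable (count_space UNIV) (\<lambda>n. pmf P n *\<^sub>R g n)"
    unfolding measure_pmf_eq_density by (subst (asm) integrable_density) auto
  then show ?thesis
    unfolding measure_pmf_eq_density
    by (subst integral_density) (auto intro: integral_count_space_nat)
qed

lemma sums_poisson_pmf_power:
  fixes a z :: "'b::{real_normed_field, banach}"
  assumes r: "r > 0"
  shows "(\<lambda>n. pmf (poisson_pmf r) n *\<^sub>R (a * z ^ n)) sums (a * exp (of_real r * (z - 1)))"
proof -
  have "(\<lambda>n. (a * of_real (exp (- r))) * ((of_real r * z) ^ n /\<^sub>R fact n))
      sums ((a * of_real (exp (- r))) * exp (of_real r * z))"
    by (intro sums_mult exp_converges)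
  moreover have "(a * of_real (exp (- r))) * ((of_real r * z) ^ n /\<^sub>R fact n)
      = pmf (poisson_pmf r) n *\<^sub>R (a * z ^ n)" for n
    using r by (simp add: scaleR_conv_of_real power_mult_distrib divide_inverse mult_ac)
  moreover have "(a * of_real (exp (- r))) * exp (of_real r * z) = a * exp (of_real r * (z - 1))"
    by (simp add: algebra_simps exp_diff exp_of_real[symmetric] exp_minus divide_inverse)
  ultimately show ?thesis by simp
qed

text \<open>\<open>gauss_jumps_law \<alpha> m c n\<close> is the law of \<open>m + c Z - U\<^sub>1 - \<dots> - U\<^sub>n\<close>: coordinate \<open>0\<close> of the
  product carries the Gaussian part, coordinates \<open>1..n\<close> the claims.\<close>

definition factor_law :: "real \<Rightarrow> real \<Rightarrow> real \<Rightarrow> nat \<Rightarrow> real measure" where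
  "factor_law \<alpha> m c i = (if i = 0 then gauss_law m c else neg_exp_law \<alpha>)"

definition gauss_jumps_law :: "real \<Rightarrow> real \<Rightarrow> real \<Rightarrow> nat \<Rightarrow> real measure" where
  "gauss_jumps_law \<alpha> m c n = distr (PiM {..n} (factor_law \<alpha> m c)) borel (\<lambda>x. \<Sum>i\<le>n. x i)"

lemma sets_factor_law[simp, measurable_cong]: "sets (factor_law \<alpha> m c i) = sets borel"
  by (simp add: factor_law_def)

lemma prob_space_factor_law: "\<alpha> > 0 \<Longrightarrow> prob_space (factor_law \<alpha> m c i)"
  by (simp add: factor_law_def prob_space_gauss_law prob_space_neg_exp_law)

lemma sets_gauss_jumps_law[simp]: "sets (gauss_jumps_law \<alpha> m c n) = sets borel"
  by (simp add: gauss_jumps_law_def)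

lemma prod_atMost_if_zero: "(\<Prod>i\<le>n. if i = 0 then a else b) = a * b ^ n"
  for a b :: "'a::comm_monoid_mult"
  by (induction n) (auto simp: mult_ac)

context
  fixes \<alpha> m c :: real
  assumes a: "\<alpha> > 0"
begin

interpretation factors: product_prob_space "factor_law \<alpha> m c"
  by (simp add: product_prob_space_def product_prob_space_axioms_def product_sigma_finite_def
      prob_space_factor_law[OF a] prob_space_imp_sigma_finite)

lemma prob_space_gauss_jumps_law: "prob_space (gauss_jumps_law \<alpha> m c n)"
  unfolding gauss_jumps_law_def
  by (intro prob_space.prob_space_distr prob_space_PiM) (auto simp: prob_space_factor_law[OF a])

lemma char_gauss_jumps_law:
  "char (gauss_jumps_law \<alpha> m c n) l = char (gauss_law m c) l * char (neg_exp_law \<alpha>) l ^ n"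
proof -
  have "char (gauss_jumps_law \<alpha> m c n) l
      = (CLINT x|PiM {..n} (factor_law \<alpha> m c). (\<Prod>i\<le>n. iexp (l * x i)))"
    unfolding char_def gauss_jumps_law_def
    by (subst integral_distr) (auto simp: sum_distrib_left exp_sum[symmetric] sum_distrib_right)
  also have "\<dots> = (\<Prod>i\<le>n. char (factor_law \<alpha> m c i) l)"
    unfolding char_def
  proof (rule factors.product_integral_prod)
    show "integrable (factor_law \<alpha> m c i) (\<lambda>x. iexp (l * x))" for i
      using prob_space_factor_law[OF a] by (rule integrable_bounded_borel[where B=1])
        (auto simp: norm_exp_eq_Re)
  qed simp
  also have "\<dots> = char (gauss_law m c) l * char (neg_exp_law \<alpha>) l ^ n"
    unfolding factor_law_def by (simp only: if_distrib[of "\<lambda>M. char M l"] prod_atMost_if_zero)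
  finally show ?thesis .
qed

lemma nn_integral_exp_gauss_jumps_law:
  "(\<integral>\<^sup>+x. ennreal (exp (t * x)) \<partial>gauss_jumps_law \<alpha> m c n)
   = (\<integral>\<^sup>+x. ennreal (exp (t * x)) \<partial>gauss_law m c) * (\<integral>\<^sup>+x. ennreal (exp (t * x)) \<partial>neg_exp_law \<alpha>) ^ n"
proof -
  have "(\<integral>\<^sup>+x. ennreal (exp (t * x)) \<partial>gauss_jumps_law \<alpha> m c n)
      = (\<integral>\<^sup>+x. (\<Prod>i\<le>n. ennreal (exp (t * x i))) \<partial>PiM {..n} (factor_law \<alpha> m c))"
    unfolding gauss_jumps_law_def
    by (subst nn_integral_distr) (auto simp: sum_distrib_left exp_sum[symmetric] prod_ennreal)
  also have "\<dots> = (\<Prod>i\<le>n. (\<integral>\<^sup>+x. ennreal (exp (t * x)) \<partial>factor_law \<alpha> m c i))"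
    by (rule factors.product_nn_integral_prod) auto
  finally show ?thesis
    unfolding factor_law_def
    by (simp only: if_distrib[of "\<lambda>M. \<integral>\<^sup>+x. ennreal (exp (t * x)) \<partial>M"] prod_atMost_if_zero)
qed

end

definition compound_law :: "real \<Rightarrow> real \<Rightarrow> real \<Rightarrow> real \<Rightarrow> real measure" where
  "compound_law \<alpha> m c r = measure_pmf (poisson_pmf r) \<bind> gauss_jumps_law \<alpha> m c"

context
  fixes \<alpha> m c r :: real
  assumes a: "\<alpha> > 0" and r: "r > 0"
begin

lemma prob_space_compound_law: "prob_space (compound_law \<alpha> m c r)"
  and sets_compound_law[simp]: "sets (compound_law \<alpha> m c r) = sets borel"
  unfolding compound_law_def
  using prob_space_gauss_jumps_law[OF a] sets_gauss_jumps_law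
  by (rule prob_space_bind_pmf_kernel, rule sets_bind_pmf_kernel)

lemma char_compound_law:
  "char (compound_law \<alpha> m c r) l = char (gauss_law m c) l * exp (r * (char (neg_exp_law \<alpha>) l - 1))"
proof -
  let ?G = "char (gauss_law m c) l" and ?Q = "char (neg_exp_law \<alpha>) l"
  have bound: "norm (?G * ?Q ^ n) \<le> 1" for n
  proof -
    have "norm ?G \<le> 1" "norm ?Q \<le> 1"
      using prob_space_gauss_law prob_space_neg_exp_law[OF a]
      by (auto intro!: real_distribution.cmod_char_le_1
          simp: real_distribution_def real_distribution_axioms_def)
    then show ?thesis
      by (simp add: norm_mult norm_power mult_le_one power_le_one)
  qed
  have "char (compound_law \<alpha> m c r) l
      = (\<integral>n. char (gauss_jumps_law \<alpha> m c n) l \<partial>measure_pmf (poisson_pmf r))"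
    unfolding compound_law_def char_def
    by (rule integral_bind_pmf_complex[OF prob_space_gauss_jumps_law[OF a] sets_gauss_jumps_law,
          where B=1]) (auto simp: norm_exp_eq_Re)
  also have "\<dots> = (\<integral>n. ?G * ?Q ^ n \<partial>measure_pmf (poisson_pmf r))"
    by (simp only: char_gauss_jumps_law[OF a])
  also have "\<dots> = (\<Sum>n. pmf (poisson_pmf r) n *\<^sub>R (?G * ?Q ^ n))"
    by (rule integral_measure_pmf_nat[OF bound])
  also have "\<dots> = ?G * exp (r * (?Q - 1))"
    using sums_poisson_pmf_power[OF r, of ?G ?Q] by (simp add: sums_iff)
  finally show ?thesis .
qed

lemma nn_integral_exp_compound_law:
  assumes t: "t > - \<alpha>"
  shows "(\<integral>\<^sup>+x. ennreal (exp (t * x)) \<partial>compound_law \<alpha> m c r)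
     = ennreal (exp (t * m + (t * c)\<^sup>2 / 2) * exp (r * (\<alpha> / (\<alpha> + t) - 1)))"
proof -
  define G where "G = exp (t * m + (t * c)\<^sup>2 / 2)"
  define Q where "Q = \<alpha> / (\<alpha> + t)"
  have Q: "Q \<ge> 0" using a t by (simp add: Q_def)
  have "(\<integral>\<^sup>+x. ennreal (exp (t * x)) \<partial>compound_law \<alpha> m c r)
      = (\<integral>\<^sup>+n. (\<integral>\<^sup>+x. ennreal (exp (t * x)) \<partial>gauss_jumps_law \<alpha> m c n) \<partial>measure_pmf (poisson_pmf r))"
    unfolding compound_law_def
    by (rule nn_integral_bind[OF _ measurable_pmf_kernel[OF prob_space_gauss_jumps_law[OF a]
          sets_gauss_jumps_law]]) measurable
  also have "\<dots> = (\<integral>\<^sup>+n. ennreal (G * Q ^ n) \<partial>measure_pmf (poisson_pmf r))"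
    using Q by (simp add: nn_integral_exp_gauss_jumps_law[OF a] nn_integral_exp_gauss_law
        nn_integral_exp_neg_exp_law[OF a t] G_def Q_def ennreal_power ennreal_mult)
  also have "\<dots> = (\<Sum>n. ennreal (pmf (poisson_pmf r) n * (G * Q ^ n)))"
    by (simp add: nn_integral_measure_pmf nn_integral_count_space_nat ennreal_mult[symmetric]
        G_def Q)
  also have "\<dots> = ennreal (G * exp (r * (Q - 1)))"
    using sums_poisson_pmf_power[OF r, of G Q] Q r
    by (subst suminf_ennreal2) (auto simp: sums_iff G_def)
  finally show ?thesis by (simp add: G_def Q_def)
qed

end

section \<open>The exponential martingale of a random walk\<close>

definition walk :: "nat \<Rightarrow> (nat \<Rightarrow> real) \<Rightarrow> real" where
  "walk k y = (\<Sum>j<k. y j)"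

definition hits :: "nat \<Rightarrow> real \<Rightarrow> (nat \<Rightarrow> real) \<Rightarrow> bool" where
  "hits N u y \<longleftrightarrow> (\<exists>k\<le>N. walk k y \<le> - u)"

text \<open>Wald's martingale \<open>exp (- g (u + walk n y) - c n)\<close> stopped at the first \<open>n\<close> with
  \<open>u + walk n y \<le> 0\<close>; it is a martingale when \<open>E exp (- g y\<^sub>k) = exp c\<close> for all steps.\<close>

fun stopped_wald :: "real \<Rightarrow> real \<Rightarrow> real \<Rightarrow> nat \<Rightarrow> (nat \<Rightarrow> real) \<Rightarrow> real" where
  "stopped_wald g c u 0 y = exp (- g * u)"
| "stopped_wald g c u (Suc N) y =
    (if hits N u y then stopped_wald g c u N y else exp (- g * (u + walk (Suc N) y) - c * Suc N))"

lemma walk_cong: "(\<And>j. j < k \<Longrightarrow> y j = y' j) \<Longrightarrow> walk k y = walk k y'"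
  unfolding walk_def by (intro sum.cong) auto

lemma hits_cong: "(\<And>j. j < N \<Longrightarrow> y j = y' j) \<Longrightarrow> hits N u y = hits N u y'"
  unfolding hits_def using walk_cong[of _ y y'] by (metis le_less_trans order_less_le_trans)

lemma stopped_wald_cong:
  "(\<And>j. j < N \<Longrightarrow> y j = y' j) \<Longrightarrow> stopped_wald g c u N y = stopped_wald g c u N y'"
proof (induction N)
  case (Suc N)
  then show ?case using hits_cong[of N y y' u] walk_cong[of "Suc N" y y'] by simp
qed simp

lemma hits_mono: "hits N u y \<Longrightarrow> N \<le> N' \<Longrightarrow> hits N' u y"
  unfolding hits_def using order_trans by blast

lemma hits_Suc_not_hits: "hits (Suc N) u y \<Longrightarrow> \<not> hits N u y \<Longrightarrow> walk (Suc N) y \<le> - u"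
  unfolding hits_def by (metis le_SucE)

lemma stopped_wald_pos: "stopped_wald g c u N y > 0"
  by (induction N) auto

lemma stopped_wald_not_hits:
  "\<not> hits N u y \<Longrightarrow> stopped_wald g c u N y = exp (- g * (u + walk N y) - c * N)"
proof (induction N)
  case 0
  then show ?case by (simp add: walk_def)
next
  case (Suc N)
  then have "\<not> hits N u y" by (auto simp: hits_def)
  then show ?case by simp
qed

lemma stopped_wald_Suc_not_hits:
  "\<not> hits N u y \<Longrightarrow>
    stopped_wald g c u (Suc N) y = stopped_wald g c u N y * exp (- g * y N) * exp (- c)"
  by (simp add: stopped_wald_not_hits walk_def exp_add[symmetric] algebra_simps)

lemma stopped_wald_not_hits_le:
  "g \<ge> 0 \<Longrightarrow> \<not> hits N u y \<Longrightarrow> stopped_wald g c u N y \<le> exp (- c * N)"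
  by (auto simp: stopped_wald_not_hits hits_def mult_nonneg_nonneg)

lemma one_le_stopped_wald:
  assumes g: "g \<ge> 0" and c: "c \<le> 0"
  shows "hits N u y \<Longrightarrow> stopped_wald g c u N y \<ge> 1"
proof (induction N)
  case 0
  then have "u \<le> 0" by (simp add: hits_def walk_def)
  then show ?case using g by (simp add: mult_nonneg_nonpos)
next
  case (Suc N)
  show ?case
  proof (cases "hits N u y")
    case False
    have "u + walk (Suc N) y \<le> 0" using hits_Suc_not_hits[OF Suc.prems False] by simp
    then have "g * (u + walk (Suc N) y) \<le> 0" "c * Suc N \<le> 0"
      using g c by (auto simp: mult_nonneg_nonpos mult_nonpos_nonneg)
    then show ?thesis using False by simp
  qed (use Suc in simp)
qed

lemma stopped_wald_first_hit_le:
  assumes g: "g \<ge> 0" and c: "c \<ge> 0" and not_hit: "\<not> hits N u y"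
  shows "stopped_wald g c u (Suc N) y
    \<le> exp (g * K) + indicator {..< -K} (y N) * exp (- g * y N) * exp (- c * Suc N)"
proof -
  have "u + walk N y > 0" using not_hit by (auto simp: hits_def)
  then have "g * (u + walk N y) \<ge> 0" using g by simp
  then have "stopped_wald g c u (Suc N) y \<le> exp (- g * y N - c * Suc N)"
    using not_hit by (simp add: walk_def algebra_simps)
  also have "\<dots> \<le> exp (g * K) + indicator {..< -K} (y N) * exp (- g * y N) * exp (- c * Suc N)"
  proof (cases "y N < - K")
    case False
    have "- g * y N \<le> g * K" using mult_left_mono[of "- y N" K g] False g by simp
    moreover have "c * Suc N \<ge> 0" using c by simp
    ultimately have "- g * y N - c * Suc N \<le> g * K" by linarith
    then show ?thesis by (simp add: add_increasing2)
  qed (simp add: exp_add[symmetric])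
  finally show ?thesis .
qed

lemma stopped_wald_hits_Suc_le:
  assumes g: "g \<ge> 0" and c: "c \<ge> 0"
  shows "(if hits (Suc N) u y then stopped_wald g c u (Suc N) y else 0)
    \<le> (if hits N u y then stopped_wald g c u N y else 0)
      + (if hits (Suc N) u y \<and> \<not> hits N u y then exp (g * K) else 0)
      + (if \<not> hits N u y \<and> y N < - K then exp (- g * y N) * exp (- c * Suc N) else 0)"
proof (cases "hits N u y")
  case True
  then show ?thesis using hits_mono[OF True, of "Suc N"] by simp
next
  case False
  then show ?thesis
    using stopped_wald_first_hit_le[OF g c False, of K] stopped_wald_pos[of g c u "Suc N" y]
    by (auto simp: exp_add[symmetric])
qed

lemma walk_measurable:
  "k \<le> N \<Longrightarrow> walk k \<in> borel_measurable (PiM {..<N} (\<lambda>_. borel))"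
  unfolding walk_def by (intro borel_measurable_sum measurable_component_singleton) auto

lemma hits_measurable:
  assumes "N \<le> N'"
  shows "hits N u \<in> measurable (PiM {..<N'} (\<lambda>_. borel)) (count_space UNIV)"
proof -
  have [measurable]: "walk k \<in> borel_measurable (PiM {..<N'} (\<lambda>_. borel))" if "k \<le> N" for k
    using that assms by (intro walk_measurable) simp
  show ?thesis
    unfolding hits_def by measurable
qed

lemma stopped_wald_measurable:
  "N \<le> N' \<Longrightarrow> stopped_wald g c u N \<in> borel_measurable (PiM {..<N'} (\<lambda>_. borel))"
proof (induction N)
  case (Suc N)
  have [measurable]: "walk (Suc N) \<in> borel_measurable (PiM {..<N'} (\<lambda>_. borel))"
    "hits N u \<in> measurable (PiM {..<N'} (\<lambda>_. borel)) (count_space UNIV)"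
    "stopped_wald g c u N \<in> borel_measurable (PiM {..<N'} (\<lambda>_. borel))"
    using Suc by (auto intro: walk_measurable hits_measurable)
  have "stopped_wald g c u (Suc N)
      = (\<lambda>y. if hits N u y then stopped_wald g c u N y else exp (- g * (u + walk (Suc N) y) - c * Suc N))"
    by (rule ext) simp
  then show ?case by simp
next
  case 0
  have "stopped_wald g c u 0 = (\<lambda>y. exp (- g * u))" by (rule ext) simp
  then show ?case by simp
qed

lemma (in prob_space) indep_var_nn_integral_mult:
  fixes X Y :: "'a \<Rightarrow> ennreal"
  assumes "indep_var borel X borel Y"
  shows "(\<integral>\<^sup>+\<omega>. X \<omega> * Y \<omega> \<partial>M) = (\<integral>\<^sup>+\<omega>. X \<omega> \<partial>M) * (\<integral>\<^sup>+\<omega>. Y \<omega> \<partial>M)"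
proof -
  have borel: "case_bool borel borel = (\<lambda>_::bool. borel)"
    by (rule ext) (simp split: bool.split)
  have "indep_vars (\<lambda>_. borel) (case_bool X Y) UNIV"
    using assms unfolding indep_var_def borel .
  from indep_vars_nn_integral[OF _ this] show ?thesis
    by (simp add: UNIV_bool mult.commute)
qed

definition first_steps :: "(nat \<Rightarrow> 'a \<Rightarrow> real) \<Rightarrow> nat \<Rightarrow> 'a \<Rightarrow> nat \<Rightarrow> real" where
  "first_steps \<xi> N \<omega> = restrict (\<lambda>j. \<xi> j \<omega>) {..<N}"

locale exp_walk = prob_space +
  fixes \<xi> :: "nat \<Rightarrow> 'a \<Rightarrow> real" and g c :: real
  assumes indep_steps: "\<And>N. indep_vars (\<lambda>_. borel) \<xi> {..<N}"
    and mgf_step: "\<And>k. (\<integral>\<^sup>+\<omega>. ennreal (exp (- g * \<xi> k \<omega>)) \<partial>M) = ennreal (exp c)"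
    and g_nonneg: "g \<ge> 0"
begin

lemma step_measurable[measurable]: "\<xi> k \<in> borel_measurable M"
  using indep_steps[of "Suc k"] by (auto simp: indep_vars_def)

lemma first_steps_measurable[measurable]: "first_steps \<xi> N \<in> measurable M (PiM {..<N} (\<lambda>_. borel))"
  unfolding first_steps_def by measurable

lemma measurable_prefix_function:
  assumes F: "F \<in> measurable (PiM {..<N} (\<lambda>_. borel)) K"
    and prefix: "\<And>y y'. (\<And>j. j < N \<Longrightarrow> y j = y' j) \<Longrightarrow> F y = F y'"
  shows "(\<lambda>\<omega>. F (\<lambda>j. \<xi> j \<omega>)) \<in> measurable M K"
proof -
  have "(\<lambda>\<omega>. F (first_steps \<xi> N \<omega>)) \<in> measurable M K"
    using F by measurable
  moreover have "F (first_steps \<xi> N \<omega>) = F (\<lambda>j. \<xi> j \<omega>)" for \<omega>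
    by (rule prefix) (simp add: first_steps_def)
  ultimately show ?thesis by simp
qed

lemma hits_steps_measurable[measurable]: "Measurable.pred M (\<lambda>\<omega>. hits N u (\<lambda>j. \<xi> j \<omega>))"
  using measurable_prefix_function[OF hits_measurable[of N N u] hits_cong]
  by (simp add: Measurable.pred_def)

lemma stopped_wald_steps_measurable[measurable]:
  "(\<lambda>\<omega>. stopped_wald g c u N (\<lambda>j. \<xi> j \<omega>)) \<in> borel_measurable M"
  using measurable_prefix_function[OF stopped_wald_measurable[of N N] stopped_wald_cong] by simp

lemma nn_integral_indep_last_step:
  fixes F :: "(nat \<Rightarrow> real) \<Rightarrow> ennreal" and G :: "real \<Rightarrow> ennreal"
  assumes F[measurable]: "F \<in> borel_measurable (PiM {..<N} (\<lambda>_. borel))"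
    and prefix: "\<And>y y'. (\<And>j. j < N \<Longrightarrow> y j = y' j) \<Longrightarrow> F y = F y'"
    and G[measurable]: "G \<in> borel_measurable borel"
  shows "(\<integral>\<^sup>+\<omega>. F (\<lambda>j. \<xi> j \<omega>) * G (\<xi> N \<omega>) \<partial>M)
    = (\<integral>\<^sup>+\<omega>. F (\<lambda>j. \<xi> j \<omega>) \<partial>M) * (\<integral>\<^sup>+\<omega>. G (\<xi> N \<omega>) \<partial>M)"
proof -
  have first: "F (first_steps \<xi> N \<omega>) = F (\<lambda>j. \<xi> j \<omega>)" for \<omega>
    by (rule prefix) (simp add: first_steps_def)
  have steps: "indep_var (PiM {..<N} (\<lambda>_. borel)) (first_steps \<xi> N)
      (PiM {N} (\<lambda>_. borel)) (\<lambda>\<omega>. restrict (\<lambda>i. \<xi> i \<omega>) {N})"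
    unfolding first_steps_def by (rule indep_var_restrict[OF indep_steps[of "Suc N"]]) auto
  have "(\<lambda>z. G (z N)) \<in> borel_measurable (PiM {N} (\<lambda>_. borel :: real measure))"
    by measurable
  from indep_var_compose[OF steps F this]
  have "indep_var borel (\<lambda>\<omega>. F (first_steps \<xi> N \<omega>)) borel (\<lambda>\<omega>. G (\<xi> N \<omega>))"
    by (simp add: comp_def)
  then show ?thesis
    unfolding first by (rule indep_var_nn_integral_mult)
qed

lemma nn_integral_stopped_wald_Suc:
  "(\<integral>\<^sup>+\<omega>. stopped_wald g c u (Suc N) (\<lambda>j. \<xi> j \<omega>) \<partial>M) = (\<integral>\<^sup>+\<omega>. stopped_wald g c u N (\<lambda>j. \<xi> j \<omega>) \<partial>M)"
proof -
  define W where "W b y = ennreal (indicator {y. hits N u y = b} y * stopped_wald g c u N y)" for b y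
  have [measurable]: "W b \<in> borel_measurable (PiM {..<N} (\<lambda>_. borel))" for b
    using hits_measurable[of N N u] stopped_wald_measurable[of N N g c u]
    unfolding W_def by measurable
  have W_prefix: "(\<And>j. j < N \<Longrightarrow> y j = y' j) \<Longrightarrow> W b y = W b y'" for b y y'
    using hits_cong[of N y y' u] stopped_wald_cong[of N y y' g c u] by (simp add: W_def indicator_def)
  have W_measurable: "(\<lambda>\<omega>. W b (\<lambda>j. \<xi> j \<omega>)) \<in> borel_measurable M" for b
    by (rule measurable_prefix_function[OF _ W_prefix]) measurable
  have split: "ennreal (stopped_wald g c u (Suc N) y)
      = W True y + W False y * ennreal (exp (- g * y N)) * ennreal (exp (- c))" for y
  proof (cases "hits N u y")
    case False
    then show ?thesis
      using stopped_wald_pos[of g c u N y]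
      by (simp add: W_def stopped_wald_Suc_not_hits ennreal_mult[symmetric] del: stopped_wald.simps)
  qed (simp add: W_def)
  have "(\<integral>\<^sup>+\<omega>. W False (\<lambda>j. \<xi> j \<omega>) * ennreal (exp (- g * \<xi> N \<omega>)) * ennreal (exp (- c)) \<partial>M)
      = (\<integral>\<^sup>+\<omega>. W False (\<lambda>j. \<xi> j \<omega>) \<partial>M) * (ennreal (exp c) * ennreal (exp (- c)))"
  proof -
    have "(\<integral>\<^sup>+\<omega>. W False (\<lambda>j. \<xi> j \<omega>) * ennreal (exp (- g * \<xi> N \<omega>)) \<partial>M)
        = (\<integral>\<^sup>+\<omega>. W False (\<lambda>j. \<xi> j \<omega>) \<partial>M) * ennreal (exp c)"
      by (subst nn_integral_indep_last_step[OF _ W_prefix]) (measurable, simp only: mgf_step)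
    then show ?thesis
      using W_measurable by (subst nn_integral_multc) (auto simp: mult.assoc)
  qed
  also have "ennreal (exp c) * ennreal (exp (- c)) = 1"
    by (simp add: ennreal_mult[symmetric] exp_minus_inverse)
  finally have "(\<integral>\<^sup>+\<omega>. stopped_wald g c u (Suc N) (\<lambda>j. \<xi> j \<omega>) \<partial>M)
      = (\<integral>\<^sup>+\<omega>. W True (\<lambda>j. \<xi> j \<omega>) \<partial>M) + (\<integral>\<^sup>+\<omega>. W False (\<lambda>j. \<xi> j \<omega>) \<partial>M)"
    unfolding split using W_measurable by (subst nn_integral_add) auto
  also have "\<dots> = (\<integral>\<^sup>+\<omega>. W True (\<lambda>j. \<xi> j \<omega>) + W False (\<lambda>j. \<xi> j \<omega>) \<partial>M)"
    by (rule nn_integral_add[symmetric, OF W_measurable W_measurable])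
  also have "\<dots> = (\<integral>\<^sup>+\<omega>. stopped_wald g c u N (\<lambda>j. \<xi> j \<omega>) \<partial>M)"
    by (intro nn_integral_cong) (simp add: W_def indicator_def)
  finally show ?thesis .
qed

lemma nn_integral_stopped_wald:
  "(\<integral>\<^sup>+\<omega>. stopped_wald g c u N (\<lambda>j. \<xi> j \<omega>) \<partial>M) = ennreal (exp (- g * u))"
  by (induction N) (simp_all only: nn_integral_stopped_wald_Suc, simp add: emeasure_space_1)

lemma events_hits: "{\<omega> \<in> space M. hits N u (\<lambda>j. \<xi> j \<omega>)} \<in> events"
  by measurable

lemma emeasure_hits_le:
  assumes "c \<le> 0"
  shows "emeasure M {\<omega> \<in> space M. hits N u (\<lambda>j. \<xi> j \<omega>)} \<le> ennreal (exp (- g * u))"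
proof -
  have "emeasure M {\<omega> \<in> space M. hits N u (\<lambda>j. \<xi> j \<omega>)}
      = (\<integral>\<^sup>+\<omega>. indicator {\<omega> \<in> space M. hits N u (\<lambda>j. \<xi> j \<omega>)} \<omega> \<partial>M)"
    by (rule nn_integral_indicator[symmetric, OF events_hits])
  also have "\<dots> \<le> (\<integral>\<^sup>+\<omega>. stopped_wald g c u N (\<lambda>j. \<xi> j \<omega>) \<partial>M)"
    using one_le_stopped_wald[OF g_nonneg assms]
    by (intro nn_integral_mono) (auto simp: indicator_def)
  finally show ?thesis
    by (simp only: nn_integral_stopped_wald)
qed

end

context exp_walk
begin

definition hit_event :: "real \<Rightarrow> nat \<Rightarrow> 'a set" where
  "hit_event u N = {\<omega> \<in> space M. hits N u (\<lambda>j. \<xi> j \<omega>)}"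

definition hit_part :: "real \<Rightarrow> nat \<Rightarrow> ennreal" where
  "hit_part u N = (\<integral>\<^sup>+\<omega>. ennreal (if hits N u (\<lambda>j. \<xi> j \<omega>) then stopped_wald g c u N (\<lambda>j. \<xi> j \<omega>) else 0) \<partial>M)"

lemma hit_event_sets[measurable]: "hit_event u N \<in> events"
  unfolding hit_event_def by measurable

lemma hit_event_mono: "hit_event u N \<subseteq> hit_event u (Suc N)"
  unfolding hit_event_def using hits_mono[of N u _ "Suc N"] by auto

lemma nn_integral_big_jump_le:
  assumes overshoot: "\<And>k. (\<integral>\<^sup>+\<omega>. ennreal (exp (- g * \<xi> k \<omega>)) * indicator {..< -K} (\<xi> k \<omega>) \<partial>M) \<le> ennreal D"
  shows "(\<integral>\<^sup>+\<omega>. ennreal (if \<not> hits N u (\<lambda>j. \<xi> j \<omega>) \<and> \<xi> N \<omega> < - K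
      then exp (- g * \<xi> N \<omega>) * exp (- c * Suc N) else 0) \<partial>M) \<le> ennreal D * ennreal (exp (- c * Suc N))"
proof -
  define F where "F y = ennreal (if hits N u y then 0 else 1)" for y
  have F_prefix: "(\<And>j. j < N \<Longrightarrow> y j = y' j) \<Longrightarrow> F y = F y'" for y y'
    using hits_cong[of N y y' u] by (simp add: F_def)
  have [measurable]: "F \<in> borel_measurable (PiM {..<N} (\<lambda>_. borel))"
    using hits_measurable[of N N u] unfolding F_def by measurable
  note F_steps_measurable = measurable_prefix_function[OF this F_prefix]
  have "(\<integral>\<^sup>+\<omega>. ennreal (if \<not> hits N u (\<lambda>j. \<xi> j \<omega>) \<and> \<xi> N \<omega> < - K
          then exp (- g * \<xi> N \<omega>) * exp (- c * Suc N) else 0) \<partial>M)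
      = (\<integral>\<^sup>+\<omega>. F (\<lambda>j. \<xi> j \<omega>) * (ennreal (exp (- g * \<xi> N \<omega>)) * indicator {..< -K} (\<xi> N \<omega>)) \<partial>M)
        * ennreal (exp (- c * Suc N))"
    using F_steps_measurable
    by (subst nn_integral_multc[symmetric], measurable)
      (auto intro!: nn_integral_cong simp: F_def indicator_def ennreal_mult)
  also have "\<dots> = (\<integral>\<^sup>+\<omega>. F (\<lambda>j. \<xi> j \<omega>) \<partial>M)
      * (\<integral>\<^sup>+\<omega>. ennreal (exp (- g * \<xi> N \<omega>)) * indicator {..< -K} (\<xi> N \<omega>) \<partial>M)
      * ennreal (exp (- c * Suc N))"
    by (subst nn_integral_indep_last_step[OF _ F_prefix]) measurable
  also have "\<dots> \<le> 1 * ennreal D * ennreal (exp (- c * Suc N))"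
  proof -
    have "(\<integral>\<^sup>+\<omega>. F (\<lambda>j. \<xi> j \<omega>) \<partial>M) \<le> (\<integral>\<^sup>+\<omega>. 1 \<partial>M)"
      by (intro nn_integral_mono) (simp add: F_def)
    then have "(\<integral>\<^sup>+\<omega>. F (\<lambda>j. \<xi> j \<omega>) \<partial>M) \<le> 1"
      by (simp add: emeasure_space_1)
    then show ?thesis
      by (intro mult_right_mono mult_mono overshoot) auto
  qed
  finally show ?thesis by simp
qed

lemma hit_part_Suc_le:
  assumes c: "c \<ge> 0"
    and overshoot: "\<And>k. (\<integral>\<^sup>+\<omega>. ennreal (exp (- g * \<xi> k \<omega>)) * indicator {..< -K} (\<xi> k \<omega>) \<partial>M) \<le> ennreal D"
  shows "hit_part u (Suc N) \<le> hit_part u N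
    + ennreal (exp (g * K)) * emeasure M (hit_event u (Suc N) - hit_event u N)
    + ennreal D * ennreal (exp (- c * Suc N))"
proof -
  define H where "H n \<omega> = (if hits n u (\<lambda>j. \<xi> j \<omega>) then stopped_wald g c u n (\<lambda>j. \<xi> j \<omega>) else 0)"
    for n \<omega>
  define T2 where "T2 \<omega> = (if hits (Suc N) u (\<lambda>j. \<xi> j \<omega>) \<and> \<not> hits N u (\<lambda>j. \<xi> j \<omega>) then exp (g * K) else 0)"
    for \<omega>
  define T3 where "T3 \<omega> = (if \<not> hits N u (\<lambda>j. \<xi> j \<omega>) \<and> \<xi> N \<omega> < - K
      then exp (- g * \<xi> N \<omega>) * exp (- c * Suc N) else 0)" for \<omega>
  have H_measurable: "(\<lambda>\<omega>. ennreal (H n \<omega>)) \<in> borel_measurable M" for n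
    unfolding H_def by measurable
  have T2_measurable: "(\<lambda>\<omega>. ennreal (T2 \<omega>)) \<in> borel_measurable M"
    unfolding T2_def by measurable
  have T3_measurable: "(\<lambda>\<omega>. ennreal (T3 \<omega>)) \<in> borel_measurable M"
    unfolding T3_def by measurable
  have nonneg: "H n \<omega> \<ge> 0" "T2 \<omega> \<ge> 0" "T3 \<omega> \<ge> 0" for n \<omega>
    using stopped_wald_pos[of g c u n "\<lambda>j. \<xi> j \<omega>"] by (auto simp: H_def T2_def T3_def)
  have "H (Suc N) \<omega> \<le> H N \<omega> + T2 \<omega> + T3 \<omega>" for \<omega>
    unfolding H_def T2_def T3_def by (rule stopped_wald_hits_Suc_le[OF g_nonneg c])
  then have "ennreal (H (Suc N) \<omega>) \<le> ennreal (H N \<omega>) + ennreal (T2 \<omega>) + ennreal (T3 \<omega>)" for \<omega>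
    using nonneg by (simp add: ennreal_leI flip: ennreal_plus)
  then have "hit_part u (Suc N) \<le> (\<integral>\<^sup>+\<omega>. ennreal (H N \<omega>) + ennreal (T2 \<omega>) + ennreal (T3 \<omega>) \<partial>M)"
    unfolding hit_part_def H_def[symmetric] by (rule nn_integral_mono)
  also have "\<dots> = (\<integral>\<^sup>+\<omega>. ennreal (H N \<omega>) + ennreal (T2 \<omega>) \<partial>M) + (\<integral>\<^sup>+\<omega>. ennreal (T3 \<omega>) \<partial>M)"
    using H_measurable T2_measurable T3_measurable by (intro nn_integral_add) auto
  also have "(\<integral>\<^sup>+\<omega>. ennreal (H N \<omega>) + ennreal (T2 \<omega>) \<partial>M) = hit_part u N + (\<integral>\<^sup>+\<omega>. ennreal (T2 \<omega>) \<partial>M)"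
    unfolding hit_part_def H_def[symmetric] using H_measurable T2_measurable by (rule nn_integral_add)
  also have "(\<integral>\<^sup>+\<omega>. ennreal (T2 \<omega>) \<partial>M)
      = ennreal (exp (g * K)) * emeasure M (hit_event u (Suc N) - hit_event u N)"
    unfolding T2_def hit_event_def
    by (subst nn_integral_cmult_indicator[symmetric])
      (measurable, auto intro!: nn_integral_cong simp: indicator_def)
  also have "(\<integral>\<^sup>+\<omega>. ennreal (T3 \<omega>) \<partial>M) \<le> ennreal D * ennreal (exp (- c * Suc N))"
    unfolding T3_def by (rule nn_integral_big_jump_le[OF overshoot])
  finally show ?thesis by (simp add: add_mono)
qed

lemma hit_part_le:
  assumes c: "c \<ge> 0" and u: "u > 0"
    and overshoot: "\<And>k. (\<integral>\<^sup>+\<omega>. ennreal (exp (- g * \<xi> k \<omega>)) * indicator {..< -K} (\<xi> k \<omega>) \<partial>M) \<le> ennreal D"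
  shows "hit_part u N \<le> ennreal (exp (g * K)) * emeasure M (hit_event u N)
    + ennreal D * (\<Sum>k<N. ennreal (exp (- c * Suc k)))"
proof (induction N)
  case 0
  have "\<not> hits 0 u y" for y using u by (simp add: hits_def walk_def)
  then show ?case by (simp add: hit_part_def)
next
  case (Suc N)
  have split: "emeasure M (hit_event u N) + emeasure M (hit_event u (Suc N) - hit_event u N)
      = emeasure M (hit_event u (Suc N))"
    using hit_event_mono[of u N] by (subst plus_emeasure) (auto simp: Un_absorb1)
  have "hit_part u (Suc N) \<le> hit_part u N
      + ennreal (exp (g * K)) * emeasure M (hit_event u (Suc N) - hit_event u N)
      + ennreal D * ennreal (exp (- c * Suc N))"
    by (rule hit_part_Suc_le[OF c overshoot])
  also have "\<dots> \<le> ennreal (exp (g * K)) * emeasure M (hit_event u N)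
      + ennreal D * (\<Sum>k<N. ennreal (exp (- c * Suc k)))
      + ennreal (exp (g * K)) * emeasure M (hit_event u (Suc N) - hit_event u N)
      + ennreal D * ennreal (exp (- c * Suc N))"
    using Suc.IH by (intro add_right_mono)
  also have "\<dots> = ennreal (exp (g * K)) * emeasure M (hit_event u (Suc N))
      + ennreal D * (\<Sum>k<Suc N. ennreal (exp (- c * Suc k)))"
    unfolding split[symmetric] by (simp add: distrib_left add_ac)
  finally show ?case .
qed

lemma exp_neg_le_hit_part:
  "ennreal (exp (- g * u)) \<le> hit_part u N + ennreal (exp (- c * N))"
proof -
  define W where "W \<omega> = stopped_wald g c u N (\<lambda>j. \<xi> j \<omega>)" for \<omega>
  define H where "H \<omega> = (if hits N u (\<lambda>j. \<xi> j \<omega>) then W \<omega> else 0)" for \<omega>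
  have H_measurable: "(\<lambda>\<omega>. ennreal (H \<omega>)) \<in> borel_measurable M"
    and rest_measurable: "(\<lambda>\<omega>. ennreal (W \<omega> - H \<omega>)) \<in> borel_measurable M"
    unfolding H_def W_def by measurable
  have "ennreal (exp (- g * u)) = (\<integral>\<^sup>+\<omega>. ennreal (H \<omega>) + ennreal (W \<omega> - H \<omega>) \<partial>M)"
    unfolding nn_integral_stopped_wald[symmetric, of u N] W_def[symmetric]
    using stopped_wald_pos[of g c u N]
    by (intro nn_integral_cong) (simp add: H_def W_def flip: ennreal_plus)
  also have "\<dots> = hit_part u N + (\<integral>\<^sup>+\<omega>. ennreal (W \<omega> - H \<omega>) \<partial>M)"
    unfolding hit_part_def H_def[symmetric] W_def[symmetric]
    using H_measurable rest_measurable by (rule nn_integral_add)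
  also have "(\<integral>\<^sup>+\<omega>. ennreal (W \<omega> - H \<omega>) \<partial>M) \<le> (\<integral>\<^sup>+\<omega>. ennreal (exp (- c * N)) \<partial>M)"
    using stopped_wald_not_hits_le[OF g_nonneg]
    by (intro nn_integral_mono) (simp add: H_def W_def ennreal_leI)
  finally show ?thesis
    by (simp add: emeasure_space_1 add_left_mono)
qed

end

lemma sum_exp_neg_mult_Suc_le:
  fixes c :: real
  assumes c: "c > 0"
  shows "(\<Sum>k<N. exp (- c * Suc k)) \<le> 1 / c"
proof -
  have q: "exp (- c) < 1" "exp (- c) > 0" using c by auto
  have "(\<Sum>k<N. exp (- c * Suc k)) = exp (- c) * (\<Sum>k<N. exp (- c) ^ k)"
    by (simp add: sum_distrib_left exp_of_nat_mult[symmetric] mult.commute exp_add[symmetric]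
        algebra_simps)
  also have "\<dots> = exp (- c) * ((1 - exp (- c) ^ N) / (1 - exp (- c)))"
    using q by (subst sum_gp_strict) auto
  also have "\<dots> \<le> exp (- c) * (1 / (1 - exp (- c)))"
    using q by (intro mult_left_mono divide_right_mono) auto
  also have "\<dots> = 1 / (exp c - 1)"
    using q by (simp add: exp_minus field_simps)
  also have "\<dots> \<le> 1 / c"
  proof -
    have "c \<le> exp c - 1" using exp_ge_add_one_self[of c] by linarith
    then show ?thesis using c by (intro divide_left_mono) auto
  qed
  finally show ?thesis .
qed

context exp_walk
begin

text \<open>Off the ruin event the stopped martingale is at most \<open>exp (- c N)\<close>, which vanishes; so its
  mass \<open>exp (- g u)\<close> sits on the ruin event, where it is at most \<open>exp (g K)\<close> unless ruin occurs
  through a step below \<open>-K\<close>, a case controlled by \<open>D\<close>.\<close>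

lemma exp_neg_le_prob_hit:
  assumes c: "c > 0" and u: "u > 0" and D: "D \<ge> 0"
    and overshoot: "\<And>k. (\<integral>\<^sup>+\<omega>. ennreal (exp (- g * \<xi> k \<omega>)) * indicator {..< -K} (\<xi> k \<omega>) \<partial>M) \<le> ennreal D"
  shows "exp (- g * u) \<le> exp (g * K) * prob (\<Union>N. hit_event u N) + D / c"
proof -
  have bound: "exp (- g * u) \<le> exp (g * K) * prob (\<Union>N. hit_event u N) + D / c + exp (- c * N)"
    for N :: nat
  proof -
    have "prob (hit_event u N) \<le> prob (\<Union>N. hit_event u N)"
      by (intro finite_measure_mono) auto
    then have hit: "ennreal (exp (g * K)) * emeasure M (hit_event u N)
        \<le> ennreal (exp (g * K) * prob (\<Union>N. hit_event u N))"
      by (simp add: emeasure_eq_measure ennreal_mult'[symmetric])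
    have "D * (\<Sum>k<N. exp (- c * Suc k)) \<le> D * (1 / c)"
      using sum_exp_neg_mult_Suc_le[OF c] D by (intro mult_left_mono)
    then have overshoots: "ennreal D * (\<Sum>k<N. ennreal (exp (- c * Suc k))) \<le> ennreal (D / c)"
      using D by (subst sum_ennreal) (auto simp: ennreal_mult'[symmetric] intro!: ennreal_leI)
    have "ennreal (exp (- g * u)) \<le> hit_part u N + ennreal (exp (- c * N))"
      by (rule exp_neg_le_hit_part)
    also have "\<dots> \<le> ennreal (exp (g * K) * prob (\<Union>N. hit_event u N)) + ennreal (D / c)
        + ennreal (exp (- c * N))"
      using hit_part_le[OF less_imp_le[OF c] u overshoot, of N] hit overshoots
      by (intro add_right_mono) (meson add_mono order_trans)
    also have "\<dots> = ennreal (exp (g * K) * prob (\<Union>N. hit_event u N) + D / c + exp (- c * N))"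
      using c D by (simp add: ennreal_plus)
    finally show ?thesis
      using c D by (subst (asm) ennreal_le_iff) auto
  qed
  have "(\<lambda>N. exp (g * K) * prob (\<Union>N. hit_event u N) + D / c + exp (- c * real N))
      \<longlonglongrightarrow> exp (g * K) * prob (\<Union>N. hit_event u N) + D / c + 0"
    using c by (intro tendsto_add tendsto_const) real_asymp
  then show ?thesis
    using bound by (intro tendsto_lowerbound) (auto intro: always_eventually)
qed

end

lemma (in prob_space) measure_completion_AE_eq_1:
  assumes AE: "AE \<omega> in M. \<omega> \<in> R" and R: "R \<subseteq> space M"
  shows "measure (completion M) R = 1"
proof -
  interpret completion: prob_space "completion M"
    by (rule prob_spaceI) (simp add: emeasure_space_1)
  have "Measurable.pred (completion M) (\<lambda>x. x \<notin> R)"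
    using AE by (intro sets_completion_AE) simp
  then have "space M - {x \<in> space M. x \<notin> R} \<in> sets (completion M)"
    by (metis Measurable.pred_def sets.compl_sets space_completion)
  moreover have "space M - {x \<in> space M. x \<notin> R} = R"
    using R by auto
  ultimately show ?thesis
    using completion.prob_eq_1 AE_completion[OF AE] by simp
qed

section \<open>The perturbed Cramer-Lundberg process\<close>

definition laplace_exponent :: "real \<Rightarrow> real \<Rightarrow> real \<Rightarrow> real \<Rightarrow> real \<Rightarrow> real" where
  "laplace_exponent p \<alpha> \<beta> s t = p * t + s * t\<^sup>2 / 2 + \<beta> * (\<alpha> / (\<alpha> + t) - 1)"

locale perturbed_risk_process =
  fixes M :: "'a measure" and X :: "real \<Rightarrow> 'a \<Rightarrow> real" and p \<alpha> \<beta> \<sigma>2 a :: real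
  assumes \<alpha>: "\<alpha> > 0" and \<beta>: "\<beta> > 0" and \<sigma>2: "\<sigma>2 > 0"
    and drift: "a = p + (LINT x|exp_jump_measure \<alpha> \<beta>. x * indicator {y. \<bar>y\<bar> < 1} x)"
    and levy: "levy_process M X"
    and characteristics: "has_characteristics M X a \<sigma>2 (exp_jump_measure \<alpha> \<beta>)"
begin

sublocale prob_space M
  using levy by (simp add: levy_process_def)

lemma X_measurable[measurable]: "t \<ge> 0 \<Longrightarrow> X t \<in> borel_measurable M"
  using levy by (simp add: levy_process_def)

lemma AE_X_zero: "AE \<omega> in M. X 0 \<omega> = 0"
  using levy by (simp add: levy_process_def)

lemma AE_cadlag: "AE \<omega> in M. cadlag (\<lambda>t. X t \<omega>)"
  using levy by (simp add: levy_process_def)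

lemma distr_X_eq_compound_law:
  assumes h: "h > 0"
  shows "distr M borel (X h) = compound_law \<alpha> (h * p) (sqrt (h * \<sigma>2)) (h * \<beta>)"
proof (rule Levy_uniqueness)
  show "real_distribution (distr M borel (X h))"
    using h by (simp add: real_distribution_def real_distribution_axioms_def prob_space_distr)
  show "real_distribution (compound_law \<alpha> (h * p) (sqrt (h * \<sigma>2)) (h * \<beta>))"
    using prob_space_compound_law[OF \<alpha>, of "h * \<beta>"] sets_compound_law[OF \<alpha>, of "h * \<beta>"] h \<beta>
    by (simp add: real_distribution_def real_distribution_axioms_def)
  show "char (distr M borel (X h)) = char (compound_law \<alpha> (h * p) (sqrt (h * \<sigma>2)) (h * \<beta>))"
  proof
    fix l
    have sq: "(l * sqrt (h * \<sigma>2))\<^sup>2 = l\<^sup>2 * h * \<sigma>2"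
      using h \<sigma>2 by (simp add: power_mult_distrib)
    have "char (distr M borel (X h)) l
        = exp (of_real h * levy_exponent a \<sigma>2 (exp_jump_measure \<alpha> \<beta>) l)"
      using characteristics h by (simp add: has_characteristics_def)
    also have "\<dots> = exp (of_real h * (\<i> * of_real (p * l) - of_real (\<sigma>2 / 2 * l\<^sup>2)
        + \<beta> * \<alpha> / (\<alpha> + \<i> * l) - \<beta>))"
      by (simp add: levy_exponent_exp_jump[OF \<alpha> \<beta> drift])
    also have "\<dots> = exp (\<i> * of_real (l * (h * p))) * exp (of_real (- ((l * sqrt (h * \<sigma>2))\<^sup>2) / 2))
        * exp (of_real (h * \<beta>) * (\<alpha> / (\<alpha> + \<i> * l) - 1))"
      unfolding exp_add[symmetric] sq by (rule arg_cong[where f=exp]) (simp add: field_simps)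
    also have "\<dots> = char (compound_law \<alpha> (h * p) (sqrt (h * \<sigma>2)) (h * \<beta>)) l"
      using h \<beta>
      by (simp add: char_compound_law[OF \<alpha>] char_gauss_law char_neg_exp_law[OF \<alpha>] flip: exp_of_real)
    finally show "char (distr M borel (X h)) l = char (compound_law \<alpha> (h * p) (sqrt (h * \<sigma>2)) (h * \<beta>)) l" .
  qed
qed

lemma nn_integral_exp_X:
  assumes h: "h > 0" and t: "t > - \<alpha>"
  shows "(\<integral>\<^sup>+\<omega>. ennreal (exp (t * X h \<omega>)) \<partial>M) = ennreal (exp (h * laplace_exponent p \<alpha> \<beta> \<sigma>2 t))"
proof -
  have sq: "(t * sqrt (h * \<sigma>2))\<^sup>2 = t\<^sup>2 * h * \<sigma>2"
    using h \<sigma>2 by (simp add: power_mult_distrib)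
  have "(\<integral>\<^sup>+\<omega>. ennreal (exp (t * X h \<omega>)) \<partial>M)
      = (\<integral>\<^sup>+x. ennreal (exp (t * x)) \<partial>compound_law \<alpha> (h * p) (sqrt (h * \<sigma>2)) (h * \<beta>))"
    using h by (simp add: distr_X_eq_compound_law[symmetric] nn_integral_distr)
  also have "\<dots> = ennreal (exp (t * (h * p) + (t * sqrt (h * \<sigma>2))\<^sup>2 / 2)
      * exp (h * \<beta> * (\<alpha> / (\<alpha> + t) - 1)))"
    using h \<beta> by (intro nn_integral_exp_compound_law[OF \<alpha> _ t]) auto
  also have "\<dots> = ennreal (exp (h * laplace_exponent p \<alpha> \<beta> \<sigma>2 t))"
    unfolding sq exp_add[symmetric] laplace_exponent_def by (simp add: field_simps)
  finally show ?thesis .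
qed

definition increment :: "real \<Rightarrow> nat \<Rightarrow> 'a \<Rightarrow> real" where
  "increment h k \<omega> = X (real (Suc k) * h) \<omega> - X (real k * h) \<omega>"

lemma walk_increment: "walk k (\<lambda>j. increment h j \<omega>) = X (real k * h) \<omega> - X 0 \<omega>"
  unfolding walk_def increment_def
  by (subst sum_lessThan_telescope[where f="\<lambda>j. X (real j * h) \<omega>"]) simp

lemma indep_increments:
  assumes h: "h > 0"
  shows "indep_vars (\<lambda>_. borel) (increment h) {..<N}"
proof -
  have indep: "\<forall>(n::nat) (t::nat \<Rightarrow> real). 0 \<le> t 0 \<and> (\<forall>k<n. t k < t (Suc k)) \<longrightarrow>
      indep_vars (\<lambda>_. borel) (\<lambda>k \<omega>. X (t (Suc k)) \<omega> - X (t k) \<omega>) {..<n}"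
    using levy unfolding levy_process_def by blast
  have "\<forall>k<N. real k * h < real (Suc k) * h"
    using h by simp
  then show ?thesis
    using indep[rule_format, of "\<lambda>k. real k * h" N] by (simp add: increment_def[abs_def])
qed

lemma nn_integral_increment:
  assumes h: "h > 0" and f[measurable]: "f \<in> borel_measurable borel"
  shows "(\<integral>\<^sup>+\<omega>. f (increment h k \<omega>) \<partial>M) = (\<integral>\<^sup>+\<omega>. f (X h \<omega>) \<partial>M)"
proof -
  have "distr M borel (increment h k) = distr M borel (X (real (Suc k) * h - real k * h))"
    using levy h unfolding levy_process_def increment_def[abs_def] by (auto intro!: mult_right_mono)
  then have "distr M borel (increment h k) = distr M borel (X h)"
    by (simp add: algebra_simps)
  have [measurable]: "increment h k \<in> borel_measurable M"
    unfolding increment_def[abs_def] using h by (intro borel_measurable_diff X_measurable) auto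
  have "(\<integral>\<^sup>+\<omega>. f (increment h k \<omega>) \<partial>M) = (\<integral>\<^sup>+x. f x \<partial>distr M borel (increment h k))"
    by (simp add: nn_integral_distr)
  also have "\<dots> = (\<integral>\<^sup>+\<omega>. f (X h \<omega>) \<partial>M)"
    using h by (simp add: \<open>distr M borel (increment h k) = distr M borel (X h)\<close> nn_integral_distr)
  finally show ?thesis .
qed

lemma exp_walk_increments:
  assumes h: "h > 0" and g: "0 \<le> g" "g < \<alpha>"
  shows "exp_walk M (increment h) g (h * laplace_exponent p \<alpha> \<beta> \<sigma>2 (- g))"
proof
  show "indep_vars (\<lambda>_. borel) (increment h) {..<N}" for N
    by (rule indep_increments[OF h])
  show "(\<integral>\<^sup>+\<omega>. ennreal (exp (- g * increment h k \<omega>)) \<partial>M)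
      = ennreal (exp (h * laplace_exponent p \<alpha> \<beta> \<sigma>2 (- g)))" for k
    using nn_integral_increment[OF h, of "\<lambda>x. ennreal (exp (- g * x))"] nn_integral_exp_X[OF h, of "- g"] g
    by simp
qed (use g in simp)

end

section \<open>The Lundberg exponent\<close>

lemma laplace_exponent_root:
  fixes p \<alpha> \<beta> s :: real
  assumes p: "p > 0" and a: "\<alpha> > 0" and b: "\<beta> > 0" and s: "s > 0" and profit: "p > \<beta> / \<alpha>"
  defines "\<gamma> \<equiv> (s * \<alpha> + 2 * p - sqrt ((s * \<alpha> - 2 * p)\<^sup>2 + 8 * s * \<beta>)) / (2 * s)"
  shows "0 < \<gamma>" and "\<gamma> < \<alpha>" and "laplace_exponent p \<alpha> \<beta> s (- \<gamma>) = 0"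
proof -
  define D where "D = (s * \<alpha> - 2 * p)\<^sup>2 + 8 * s * \<beta>"
  define S where "S = sqrt D"
  define A where "A = s * \<alpha> + 2 * p"
  have S: "S \<ge> 0" "S\<^sup>2 = D"
    using s b by (auto simp: S_def D_def)
  have \<gamma>: "\<gamma> = (A - S) / (2 * s)"
    by (simp add: \<gamma>_def A_def S_def D_def)
  have "p * \<alpha> > \<beta>"
    using profit a by (simp add: field_simps)
  then have "S\<^sup>2 < A\<^sup>2"
    unfolding S D_def A_def using s by (simp add: power2_eq_square algebra_simps)
  then have "S < A"
    using power2_less_imp_less[of S A] s a p by (auto simp: A_def)
  then show "0 < \<gamma>" unfolding \<gamma> using s by simp
  have "2 * p - s * \<alpha> < S"
  proof (cases "2 * p - s * \<alpha> < 0")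
    case False
    have "(2 * p - s * \<alpha>)\<^sup>2 < S\<^sup>2"
      unfolding S D_def using s b by (simp add: power2_commute)
    then show ?thesis using S power2_less_imp_less[of "2 * p - s * \<alpha>" S] by auto
  qed (use S in linarith)
  then show less: "\<gamma> < \<alpha>" unfolding \<gamma> using s by (simp add: A_def field_simps)
  have quadratic: "s * \<gamma>\<^sup>2 - A * \<gamma> + 2 * (p * \<alpha> - \<beta>) = 0"
  proof -
    have "s * \<gamma>\<^sup>2 - A * \<gamma> + 2 * (p * \<alpha> - \<beta>) = (S\<^sup>2 - A\<^sup>2 + 8 * s * (p * \<alpha> - \<beta>)) / (4 * s)"
      unfolding \<gamma> using s by (simp add: field_simps power2_eq_square)
    also have "S\<^sup>2 - A\<^sup>2 + 8 * s * (p * \<alpha> - \<beta>) = 0"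
      unfolding S D_def A_def by (simp add: power2_eq_square algebra_simps)
    finally show ?thesis by simp
  qed
  have "\<alpha> - \<gamma> > 0" using less by simp
  then have "laplace_exponent p \<alpha> \<beta> s (- \<gamma>)
      = \<gamma> / (2 * (\<alpha> - \<gamma>)) * (- (s * \<gamma>\<^sup>2 - A * \<gamma> + 2 * (p * \<alpha> - \<beta>)))"
    unfolding laplace_exponent_def A_def by (simp add: field_simps power2_eq_square)
  then show "laplace_exponent p \<alpha> \<beta> s (- \<gamma>) = 0"
    using quadratic by simp
qed

lemma laplace_exponent_neg_ge:
  assumes "\<alpha> > 0" "\<beta> > 0" "p \<le> \<beta> / \<alpha>" "0 < r" "r < \<alpha>"
  shows "laplace_exponent p \<alpha> \<beta> s (- r) \<ge> s * r\<^sup>2 / 2"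
proof -
  have "\<beta> / \<alpha> \<le> \<beta> / (\<alpha> - r)"
    using assms by (intro divide_left_mono) auto
  then have "0 \<le> r * (\<beta> / (\<alpha> - r) - p)"
    using assms by simp
  moreover have "laplace_exponent p \<alpha> \<beta> s (- r) = s * r\<^sup>2 / 2 + r * (\<beta> / (\<alpha> - r) - p)"
    unfolding laplace_exponent_def using assms by (simp add: field_simps power2_eq_square)
  ultimately show ?thesis by simp
qed


section \<open>Exponential bound on the ruin probability\<close>

lemma cadlag_dyadic_below:
  assumes f: "cadlag f" and t: "t \<ge> 0" and below: "f t < v"
  shows "\<exists>n k. k \<le> 4 ^ n \<and> f (real k / 2 ^ n) < v"
proof -
  have "(f \<longlongrightarrow> f t) (at_right t)"
    using f t by (simp add: cadlag_def continuous_within)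
  then have "\<forall>\<^sub>F s in at_right t. f s < v"
    using below by (rule order_tendstoD)
  then obtain b where b: "b > t" and near: "\<And>s. t < s \<Longrightarrow> s < b \<Longrightarrow> f s < v"
    by (auto simp: eventually_at_right_field)
  obtain n :: nat where n1: "1 / 2 ^ n < b - t" and n2: "t + 1 \<le> 2 ^ n"
  proof -
    obtain n1 :: nat where "1 / 2 ^ n1 < b - t"
      using real_arch_pow_inv[of "b - t" "1/2"] b by (auto simp: power_one_over)
    moreover obtain n2 :: nat where "t + 1 < 2 ^ n2"
      using real_arch_pow[of 2 "t + 1"] by auto
    ultimately show ?thesis
      by (intro that[of "max n1 n2"])
        (auto intro: order.strict_trans1[rotated] order_trans[OF less_imp_le]
          simp: power_increasing divide_le_eq_1 frac_le)
  qed
  define k where "k = nat \<lfloor>t * 2 ^ n\<rfloor> + 1"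
  have floor: "real (nat \<lfloor>t * 2 ^ n\<rfloor>) \<le> t * 2 ^ n" "t * 2 ^ n < real (nat \<lfloor>t * 2 ^ n\<rfloor>) + 1"
    using t by (auto simp: of_nat_nat)
  have "t < real k / 2 ^ n" "real k / 2 ^ n \<le> t + 1 / 2 ^ n"
    using floor by (simp_all add: k_def field_simps)
  then have "f (real k / 2 ^ n) < v"
    using n1 by (intro near) auto
  moreover have "real k \<le> real (4 ^ n)"
  proof -
    have "real k \<le> t * 2 ^ n + 1"
      using floor(1) by (simp add: k_def)
    also have "\<dots> \<le> (t + 1) * 2 ^ n"
      by (simp add: algebra_simps)
    also have "\<dots> \<le> 2 ^ n * 2 ^ n"
      using n2 by (intro mult_right_mono) auto
    finally show ?thesis
      by (simp add: power_mult_distrib[symmetric])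
  qed
  ultimately show ?thesis
    by (intro exI[of _ n] exI[of _ k]) simp
qed

context perturbed_risk_process
begin

lemma emeasure_ruin_on_grid_le:
  assumes h: "h > 0" and g: "0 < g" "g < \<alpha>" and root: "laplace_exponent p \<alpha> \<beta> \<sigma>2 (- g) = 0"
  shows "emeasure M {\<omega> \<in> space M. \<exists>k\<le>N. X (real k * h) \<omega> \<le> - u} \<le> ennreal (exp (- g * u))"
proof -
  interpret exp_walk M "increment h" g 0
    using exp_walk_increments[OF h, of g] g root by simp
  have "emeasure M {\<omega> \<in> space M. \<exists>k\<le>N. X (real k * h) \<omega> \<le> - u}
      \<le> emeasure M {\<omega> \<in> space M. hits N u (\<lambda>j. increment h j \<omega>)}"
    using AE_X_zero
    by (intro emeasure_mono_AE events_hits) (auto elim!: eventually_mono simp: hits_def walk_increment)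
  also have "\<dots> \<le> ennreal (exp (- g * u))"
    by (rule emeasure_hits_le) simp
  finally show ?thesis .
qed

definition dyadic_ruin :: "real \<Rightarrow> nat \<Rightarrow> 'a set" where
  "dyadic_ruin v n = {\<omega> \<in> space M. \<exists>k\<le>4 ^ n. X (real k / 2 ^ n) \<omega> \<le> - v}"

lemma dyadic_ruin_sets[measurable]: "dyadic_ruin v n \<in> events"
proof -
  have "dyadic_ruin v n = (\<Union>k\<le>4 ^ n. {\<omega> \<in> space M. X (real k / 2 ^ n) \<omega> \<le> - v})"
    by (auto simp: dyadic_ruin_def)
  also have "\<dots> \<in> events"
    by (intro sets.finite_UN) auto
  finally show ?thesis .
qed

lemma incseq_dyadic_ruin: "incseq (dyadic_ruin v)"
proof (rule incseq_SucI)
  fix n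
  show "dyadic_ruin v n \<subseteq> dyadic_ruin v (Suc n)"
  proof
    fix \<omega> assume "\<omega> \<in> dyadic_ruin v n"
    then obtain k where "\<omega> \<in> space M" "k \<le> 4 ^ n" "X (real k / 2 ^ n) \<omega> \<le> - v"
      by (auto simp: dyadic_ruin_def)
    moreover have "real (2 * k) / 2 ^ Suc n = real k / 2 ^ n"
      by simp
    ultimately show "\<omega> \<in> dyadic_ruin v (Suc n)"
      unfolding dyadic_ruin_def by (intro CollectI conjI exI[of _ "2 * k"]) auto
  qed
qed

lemma emeasure_dyadic_ruin_le:
  assumes g: "0 < g" "g < \<alpha>" and root: "laplace_exponent p \<alpha> \<beta> \<sigma>2 (- g) = 0"
  shows "emeasure M (\<Union>n. dyadic_ruin v n) \<le> ennreal (exp (- g * v))"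
proof -
  have "emeasure M (\<Union>n. dyadic_ruin v n) = (SUP n. emeasure M (dyadic_ruin v n))"
    using incseq_dyadic_ruin by (intro SUP_emeasure_incseq[symmetric]) auto
  also have "\<dots> \<le> ennreal (exp (- g * v))"
  proof (rule SUP_least)
    show "emeasure M (dyadic_ruin v n) \<le> ennreal (exp (- g * v))" for n
      using emeasure_ruin_on_grid_le[OF _ g root, of "1 / 2 ^ n" "4 ^ n" v]
      by (simp add: dyadic_ruin_def)
  qed
  finally show ?thesis .
qed

text \<open>By right continuity, every ruin happens within \<open>e\<close> of a ruin at a dyadic time.\<close>

lemma AE_ruin_dyadic:
  assumes e: "e > 0"
  shows "AE \<omega> in M. ruin_time X u \<omega> < \<infinity> \<longrightarrow> \<omega> \<in> (\<Union>n. dyadic_ruin (u - e) n)"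
  using AE_cadlag AE_space
proof eventually_elim
  case (elim \<omega>)
  show ?case
  proof
    assume "ruin_time X u \<omega> < \<infinity>"
    then obtain t where t: "t \<ge> 0" "X t \<omega> \<le> - u"
      by (auto simp: ruin_time_def split: if_splits)
    then have "X t \<omega> < - (u - e)"
      using e by linarith
    from cadlag_dyadic_below[OF elim(1) t(1) this] obtain n k
      where "k \<le> 4 ^ n" "X (real k / 2 ^ n) \<omega> < - (u - e)" by blast
    then show "\<omega> \<in> (\<Union>n. dyadic_ruin (u - e) n)"
      unfolding dyadic_ruin_def using elim(2) by force
  qed
qed
lemma ruin_prob_le_exp:
  assumes g: "0 < g" "g < \<alpha>" and root: "laplace_exponent p \<alpha> \<beta> \<sigma>2 (- g) = 0"
  shows "ruin_prob M X u \<le> exp (- g * u)"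
proof -
  define R where "R = {\<omega> \<in> space M. ruin_time X u \<omega> < \<infinity>}"
  have approx: "ruin_prob M X u \<le> exp (- g * (u - e))" if e: "e > 0" for e
  proof -
    have "emeasure (completion M) R \<le> emeasure (completion M) (\<Union>n. dyadic_ruin (u - e) n)"
      using AE_ruin_dyadic[OF e]
      by (intro emeasure_mono_AE) (auto intro: AE_completion simp: R_def)
    also have "\<dots> = emeasure M (\<Union>n. dyadic_ruin (u - e) n)"
      by simp
    also have "\<dots> \<le> ennreal (exp (- g * (u - e)))"
      by (rule emeasure_dyadic_ruin_le[OF g root])
    finally show ?thesis
      unfolding ruin_prob_def R_def[symmetric] measure_def by (simp add: enn2real_leI)
  qed
  have "((\<lambda>e. exp (- g * (u - e))) \<longlongrightarrow> exp (- g * (u - 0))) (at_right 0)"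
    by (intro tendsto_intros)
  then show ?thesis
    by (intro tendsto_lowerbound[where F="at_right (0::real)"])
      (use approx in \<open>auto simp: eventually_at_right_field intro!: exI[of _ 1]\<close>)
qed


section \<open>Certain ruin without a safety loading\<close>

lemma nn_integral_exp_lower_tail_le:
  assumes r: "0 < r" "r < s" and s: "s < \<alpha>"
  shows "(\<integral>\<^sup>+\<omega>. ennreal (exp (- r * increment 1 k \<omega>)) * indicator {..< -K} (increment 1 k \<omega>) \<partial>M)
    \<le> ennreal (exp (- (s - r) * K) * exp (laplace_exponent p \<alpha> \<beta> \<sigma>2 (- s)))"
proof -
  have tail: "ennreal (exp (- r * x)) * indicator {..< -K} x
      \<le> ennreal (exp (- (s - r) * K)) * ennreal (exp (- s * x))" for x :: real
  proof (cases "x < - K")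
    case True
    then have "(s - r) * x \<le> (s - r) * (- K)"
      using r by (intro mult_left_mono) auto
    then have "exp (- r * x) \<le> exp (- (s - r) * K) * exp (- s * x)"
      by (simp add: exp_add[symmetric] algebra_simps)
    then show ?thesis
      using True by (simp add: ennreal_mult[symmetric] ennreal_leI)
  qed simp
  have "(\<integral>\<^sup>+\<omega>. ennreal (exp (- r * increment 1 k \<omega>)) * indicator {..< -K} (increment 1 k \<omega>) \<partial>M)
      = (\<integral>\<^sup>+\<omega>. ennreal (exp (- r * X 1 \<omega>)) * indicator {..< -K} (X 1 \<omega>) \<partial>M)"
    by (rule nn_integral_increment[where f="\<lambda>x. ennreal (exp (- r * x)) * indicator {..< -K} x"]) auto
  also have "\<dots> \<le> (\<integral>\<^sup>+\<omega>. ennreal (exp (- (s - r) * K)) * ennreal (exp (- s * X 1 \<omega>)) \<partial>M)"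
    using tail by (intro nn_integral_mono) auto
  also have "\<dots> = ennreal (exp (- (s - r) * K)) * ennreal (exp (laplace_exponent p \<alpha> \<beta> \<sigma>2 (- s)))"
    using nn_integral_exp_X[of 1 "- s"] r s by (subst nn_integral_cmult) auto
  finally show ?thesis
    by (simp add: ennreal_mult)
qed

definition integer_ruin :: "real \<Rightarrow> 'a set" where
  "integer_ruin u = (\<Union>N. {\<omega> \<in> space M. hits N u (\<lambda>j. increment 1 j \<omega>)})"

text \<open>Taking \<open>g = r\<close> and \<open>K = 1 / sqrt r\<close> in the lower bound for the walk of unit increments:
  the overshoot term then vanishes as \<open>r \<rightarrow> 0\<close> faster than the drift \<open>\<psi>(-r) \<ge> \<sigma>\<^sup>2 r\<^sup>2 / 2\<close>.\<close>

lemma prob_integer_ruin_lower: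
  assumes no_loading: "p \<le> \<beta> / \<alpha>" and u: "u > 0" and r: "0 < r" "r < \<alpha> / 2"
  defines "C \<equiv> exp (laplace_exponent p \<alpha> \<beta> \<sigma>2 (- (\<alpha> / 2)))"
  shows "exp (- sqrt r) * (exp (- r * u) - C * exp (- (\<alpha> / 2 - r) / sqrt r) * (2 / (\<sigma>2 * r\<^sup>2)))
    \<le> prob (integer_ruin u)"
proof -
  define K where "K = 1 / sqrt r"
  define c where "c = laplace_exponent p \<alpha> \<beta> \<sigma>2 (- r)"
  define D where "D = exp (- (\<alpha> / 2 - r) * K) * C"
  have c: "c \<ge> \<sigma>2 * r\<^sup>2 / 2"
    using laplace_exponent_neg_ge[OF \<alpha> \<beta> no_loading, of r \<sigma>2] r unfolding c_def by simp
  moreover have "\<sigma>2 * r\<^sup>2 / 2 > 0"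
    using r \<sigma>2 by simp
  ultimately have "c > 0" by linarith
  interpret exp_walk M "increment 1" r c
    using exp_walk_increments[of 1 r] r \<alpha> by (simp add: c_def)
  have "exp (- r * u) \<le> exp (r * K) * prob (\<Union>N. hit_event u N) + D / c"
    using nn_integral_exp_lower_tail_le[of r "\<alpha> / 2" _ K] r \<alpha> u \<open>c > 0\<close>
    by (intro exp_neg_le_prob_hit) (auto simp: D_def C_def)
  also have "(\<Union>N. hit_event u N) = integer_ruin u"
    by (simp add: hit_event_def integer_ruin_def)
  also have "D / c \<le> C * exp (- (\<alpha> / 2 - r) / sqrt r) * (2 / (\<sigma>2 * r\<^sup>2))"
  proof -
    have "D / c \<le> D / (\<sigma>2 * r\<^sup>2 / 2)"
      using c \<open>c > 0\<close> r \<sigma>2 by (intro divide_left_mono) (auto simp: D_def C_def)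
    then show ?thesis
      by (simp add: D_def K_def field_simps)
  qed
  finally have "exp (- r * u) - C * exp (- (\<alpha> / 2 - r) / sqrt r) * (2 / (\<sigma>2 * r\<^sup>2))
      \<le> exp (sqrt r) * prob (integer_ruin u)"
    using r by (simp add: K_def real_div_sqrt)
  then show ?thesis
    by (simp add: exp_minus field_simps)
qed

lemma prob_integer_ruin:
  assumes no_loading: "p \<le> \<beta> / \<alpha>" and u: "u > 0"
  shows "prob (integer_ruin u) = 1"
proof -
  define C where "C = exp (laplace_exponent p \<alpha> \<beta> \<sigma>2 (- (\<alpha> / 2)))"
  have lim: "((\<lambda>r. exp (- sqrt r) * (exp (- r * u) - C * exp (- (\<alpha> / 2 - r) / sqrt r) * (2 / (\<sigma>2 * r\<^sup>2))))
      \<longlongrightarrow> 1) (at_right 0)"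
    using \<alpha> \<sigma>2 by real_asymp
  have lower: "\<forall>\<^sub>F r in at_right 0.
      exp (- sqrt r) * (exp (- r * u) - C * exp (- (\<alpha> / 2 - r) / sqrt r) * (2 / (\<sigma>2 * r\<^sup>2)))
      \<le> prob (integer_ruin u)"
    using \<alpha> prob_integer_ruin_lower[OF no_loading u] unfolding C_def eventually_at_right_field
    by (intro exI[of _ "\<alpha> / 2"]) auto
  have "1 \<le> prob (integer_ruin u)"
    by (rule tendsto_le[OF _ tendsto_const lim lower]) simp
  then show ?thesis
    using prob_le_1[of "integer_ruin u"] by simp
qed

lemma ruin_prob_eq_one:
  assumes no_loading: "p \<le> \<beta> / \<alpha>" and u: "u \<ge> 0"
  shows "ruin_prob M X u = 1"
proof -
  define R where "R = {\<omega> \<in> space M. ruin_time X u \<omega> < \<infinity>}"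
  have AE_ruin: "AE \<omega> in M. \<omega> \<in> R"
  proof (cases "u = 0")
    case True
    show ?thesis
      using AE_X_zero AE_space
      by eventually_elim (use True in \<open>auto simp: R_def ruin_time_def\<close>)
  next
    case False
    then have "AE \<omega> in M. \<omega> \<in> integer_ruin u"
      using u prob_integer_ruin[OF no_loading] by (intro AE_prob_1) auto
    then show ?thesis
      using AE_X_zero
    proof eventually_elim
      case (elim \<omega>)
      then obtain N k where "\<omega> \<in> space M" "k \<le> N" "walk k (\<lambda>j. increment 1 j \<omega>) \<le> - u"
        by (auto simp: integer_ruin_def hits_def)
      then show ?case
        using elim by (auto simp: R_def ruin_time_def walk_increment intro!: exI[of _ "real k"])
    qed
  qed
  then show ?thesis
    unfolding ruin_prob_def R_def[symmetric] by (rule measure_completion_AE_eq_1) (simp add: R_def)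
qed

end

theorem proposition1:
  fixes M :: "'a measure" and X :: "real \<Rightarrow> 'a \<Rightarrow> real"
    and p \<alpha> \<beta> \<sigma>2 a :: real
  assumes "p > 0" and "\<alpha> > 0" and "\<beta> > 0" and "\<sigma>2 > 0"
    and "a = p + (LINT x|exp_jump_measure \<alpha> \<beta>. x * indicator {y. \<bar>y\<bar> < 1} x)"
    and "levy_process M X"
    and "has_characteristics M X a \<sigma>2 (exp_jump_measure \<alpha> \<beta>)"
  shows "let \<Delta> = (\<sigma>2 * \<alpha> - 2 * p)\<^sup>2 + 8 * \<sigma>2 * \<beta>;
             \<gamma> = (\<sigma>2 * \<alpha> + 2 * p - sqrt \<Delta>) / (2 * \<sigma>2)
         in (p \<le> \<beta> / \<alpha> \<longrightarrow> (\<forall>u\<ge>0. ruin_prob M X u = 1))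
          \<and> (p > \<beta> / \<alpha> \<and> \<gamma> < \<alpha> \<longrightarrow> (\<forall>u\<ge>0. ruin_prob M X u \<le> exp (- \<gamma> * u)))
          \<and> (p > \<beta> / \<alpha> \<and> \<gamma> \<ge> \<alpha> \<longrightarrow> (\<forall>u\<ge>0. ruin_prob M X u \<le> exp (- \<alpha> * u)))"
proof -
  interpret perturbed_risk_process M X p \<alpha> \<beta> \<sigma>2 a
    using assms by unfold_locales
  define \<gamma> where "\<gamma> = (\<sigma>2 * \<alpha> + 2 * p - sqrt ((\<sigma>2 * \<alpha> - 2 * p)\<^sup>2 + 8 * \<sigma>2 * \<beta>)) / (2 * \<sigma>2)"
  have root: "0 < \<gamma> \<and> \<gamma> < \<alpha> \<and> laplace_exponent p \<alpha> \<beta> \<sigma>2 (- \<gamma>) = 0" if "p > \<beta> / \<alpha>"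
    using laplace_exponent_root[OF assms(1-4) that] unfolding \<gamma>_def by blast
  show ?thesis
    unfolding Let_def \<gamma>_def[symmetric]
    using ruin_prob_eq_one ruin_prob_le_exp root by (auto simp: not_le)
qed

end
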